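(* Fix $L\in\mathbb{N}$ and $b\in(0,1)$. For each $n$ let $d_n=3\log n$ and $r_\ell=n^{(1-b)2^{-\ell}}$, $\ell=1,\dots,L$, and consider an $L$-layer angle-dense construction with these parameters (which depends only on $n,L,b$), with code words $o_{s^L}$ and decoding sets \[ \mathcal{D}_{s^L}=\bigcap_{\ell=1}^L\Bigl\{y\in\mathbb{R}^n:\ \frac{|(y-o_{s^\ell},\,o_{s^\ell}-o_{s^{\ell-1}})|}{\|o_{s^\ell}-o_{s^{\ell-1}}\|}\le\log n\Bigr\}. \] The arrangements can be chosen (independently of any channel parameters) so that $\frac{\log N}{n\log n}\ge\frac{1-b}{2}\sum_{\ell=1}^L2^{-\ell}-o(1)$ as $n\to\infty$, and such that for every $P>0$ and every $\sigma>0$ there is $n_0$ with the property that for all $n\ge n_0$ all code words satisfy $\|o_{s^L}\|^2\le nP$ and the code is an $(n,N,L\lambda'_n,\lambda'_n)$ DI code for the AWGN channel with noise standard deviation $\sigma$ and power constraint $P$, where $\lambda'_n=2\Phi(-\log n/\sigma)$. Consequently, this universal family achieves the linearithmic rate $\frac12$ (i.e. the capacity) simultaneously for all AWGN channels.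
   Context: AWGN channel: on input $x^n\in\mathbb{R}^n$ the output is $Y^n=x^n+\sigma Z^n$, $Z^n$ with i.i.d. $\mathcal{N}(0,1)$ components; output distribution $\mathcal{G}_{x^n}=\mathcal{N}(x^n,\sigma^2I_n)$; admissible inputs satisfy $\|x^n\|^2\le nP$. An $(n,N,\lambda_1,\lambda_2)$ DI code is a family $\{(u_i,\mathcal{D}_i)\}_{i=1}^N$ of admissible $u_i$ and measurable $\mathcal{D}_i\subseteq\mathbb{R}^n$ with $\mathcal{G}_{u_i}(\mathcal{D}_i)\ge1-\lambda_1$ and $\mathcal{G}_{u_j}(\mathcal{D}_i)\le\lambda_2$ for $i\neq j$. $\Phi$ is the standard Gaussian CDF; logarithms are base 2. $L$-layer angle-dense construction: set $o_{s^0}:=0$; recursively for $\ell=1,\dots,L$ and each $o_{s^{\ell-1}}$, let $V_{s^{\ell-1}}$ be the span of the path vectors $o_{s^j}-o_{s^{j-1}}$, $j<\ell$, and choose points $o_{(s^{\ell-1},s)}$, $s=1,\dots,N_\ell$, forming a $d$-angle-dense arrangement on the sphere of radius $r_\ell$ centred at $o_{s^{\ell-1}}$ inside the affine subspace $o_{s^{\ell-1}}+V_{s^{\ell-1}}^\perp$; the code words are the $N=\prod_\ell N_\ell$ points $o_{s^L}$. Points $\{p_j\}$ on a sphere centred at $c$ are $d$-angle-dense if, with $a_j=p_j-c$, $\|\Pi_{a_k}a_j-a_k\|\ge d$ for $j\neq k$, where $\Pi_{\vec a}\vec v:=\frac{(\vec a,\vec v)}{\|\vec a\|^2}\vec a$.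 *)

theory Defs
  imports "HOL-Probability.Probability"
begin

text \<open>Vectors of R^n are modelled as functions nat => real; only coordinates i < n matter.
  The ambient space R^n is the extensional function space used by the product measure.\<close>

definition Rn :: "nat \<Rightarrow> (nat \<Rightarrow> real) set" where
  "Rn n = PiE {..<n} (\<lambda>_. UNIV)"

definition origin :: "nat \<Rightarrow> (nat \<Rightarrow> real)" where
  "origin n = (\<lambda>i\<in>{..<n}. 0)"

definition inner_n :: "nat \<Rightarrow> (nat \<Rightarrow> real) \<Rightarrow> (nat \<Rightarrow> real) \<Rightarrow> real" where
  "inner_n n x y = (\<Sum>i<n. x i * y i)"

definition norm_n :: "nat \<Rightarrow> (nat \<Rightarrow> real) \<Rightarrow> real" where
  "norm_n n x = sqrt (inner_n n x x)"

definition proj_n :: "nat \<Rightarrow> (nat \<Rightarrow> real) \<Rightarrow> (nat \<Rightarrow> real) \<Rightarrow> (nat \<Rightarrow> real)" where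
  "proj_n n a v = (\<lambda>i. inner_n n a v / (norm_n n a)\<^sup>2 * a i)"

definition gauss_out :: "nat \<Rightarrow> real \<Rightarrow> (nat \<Rightarrow> real) \<Rightarrow> (nat \<Rightarrow> real) measure" where
  "gauss_out n \<sigma> x = PiM {..<n} (\<lambda>i. density lborel (\<lambda>y. ennreal (normal_density (x i) \<sigma> y)))"

definition Phi :: "real \<Rightarrow> real" where
  "Phi x = measure (density lborel (\<lambda>y. ennreal (std_normal_density y))) {..x}"

definition DI_code :: "nat \<Rightarrow> real \<Rightarrow> real \<Rightarrow> 'i set \<Rightarrow> ('i \<Rightarrow> nat \<Rightarrow> real)
    \<Rightarrow> ('i \<Rightarrow> (nat \<Rightarrow> real) set) \<Rightarrow> real \<Rightarrow> real \<Rightarrow> bool" where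
  "DI_code n P \<sigma> I u D lam1 lam2 \<longleftrightarrow>
     finite I \<and>
     (\<forall>i\<in>I. u i \<in> Rn n \<and> (norm_n n (u i))\<^sup>2 \<le> real n * P) \<and>
     (\<forall>i\<in>I. D i \<in> sets (gauss_out n \<sigma> (u i))) \<and>
     (\<forall>i\<in>I. measure (gauss_out n \<sigma> (u i)) (D i) \<ge> 1 - lam1) \<and>
     (\<forall>i\<in>I. \<forall>j\<in>I. i \<noteq> j \<longrightarrow> measure (gauss_out n \<sigma> (u j)) (D i) \<le> lam2)"

definition angle_dense :: "nat \<Rightarrow> real \<Rightarrow> (nat \<Rightarrow> real) \<Rightarrow> nat \<Rightarrow> (nat \<Rightarrow> nat \<Rightarrow> real) \<Rightarrow> bool" where
  "angle_dense n d c m p \<longleftrightarrow>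
     (\<forall>j<m. \<forall>k<m. j \<noteq> k \<longrightarrow>
        norm_n n (proj_n n (p k - c) (p j - c) - (p k - c)) \<ge> d)"

text \<open>Index sequences s^k = (s_1,...,s_k) with s_l in {1..N_l} (here 0-based: s!(l-1) < N l).\<close>
definition idx :: "(nat \<Rightarrow> nat) \<Rightarrow> nat \<Rightarrow> nat list set" where
  "idx Ns k = {s. length s = k \<and> (\<forall>j<k. s ! j < Ns (j + 1))}"

text \<open>Path vector number j (1 <= j <= length s) of the node s.\<close>
definition path_vec :: "(nat list \<Rightarrow> nat \<Rightarrow> real) \<Rightarrow> nat list \<Rightarrow> nat \<Rightarrow> (nat \<Rightarrow> real)" where
  "path_vec pt s j = pt (take j s) - pt (take (j - 1) s)"

text \<open>The node pt s (s of length l) is the child of pt (butlast s). The children of pt s lie in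
  R^n, on the sphere of radius r (l+1) around o s, inside pt s + V^perp where V is the span of
  the path vectors of s (orthogonality to the span = orthogonality to each path vector),
  and they form a d-angle-dense arrangement.\<close>
definition angle_dense_construction :: "nat \<Rightarrow> nat \<Rightarrow> real \<Rightarrow> (nat \<Rightarrow> real) \<Rightarrow> (nat \<Rightarrow> nat)
    \<Rightarrow> (nat list \<Rightarrow> nat \<Rightarrow> real) \<Rightarrow> bool" where
  "angle_dense_construction n L d r Ns pt \<longleftrightarrow>
     pt [] = origin n \<and>
     (\<forall>l<L. \<forall>s\<in>idx Ns l.
        (\<forall>t < Ns (l + 1).
            pt (s @ [t]) \<in> Rn n \<and>
            norm_n n (pt (s @ [t]) - pt s) = r (l + 1) \<and>
            (\<forall>j\<in>{1..l}. inner_n n (path_vec pt s j) (pt (s @ [t]) - pt s) = 0)) \<and>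
        angle_dense n d (pt s) (Ns (l + 1)) (\<lambda>t. pt (s @ [t])))"

definition decoding_set :: "nat \<Rightarrow> nat \<Rightarrow> (nat list \<Rightarrow> nat \<Rightarrow> real) \<Rightarrow> nat list \<Rightarrow> (nat \<Rightarrow> real) set" where
  "decoding_set n L pt s =
     {y \<in> Rn n. \<forall>l\<in>{1..L}.
        \<bar>inner_n n (y - pt (take l s)) (path_vec pt s l)\<bar> / norm_n n (path_vec pt s l) \<le> log 2 (real n)}"

end

(*
  A code word is a leaf of the tree; its path vectors have lengths r_1 > ... > r_L and are
  pairwise orthogonal. The decoder of s^L tests, for each layer l, the projection of the output
  onto the l-th path vector. When s^L is sent, the later path vectors are orthogonal to this
  direction, so the projection is pure N(0, sigma^2) noise and each of the L tests fails with
  probability at most 2 Phi(-log n / sigma). When another code word is sent that branches off at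
  layer l, angle-density of the siblings together with the smallness of the remaining tail,
  sum_{j > l} r_j^2 <= L r_l, shifts that projection by at least 2 r_l log n, so the l-th test
  accepts with probability at most 2 Phi(-log n / sigma).

  Layer l is a Gilbert-Varshamov packing of a scaled integer grid
  in R^(n-l), lifted onto the sphere of radius r_l; its minimum distance delta_l with
  delta_l^2 = 6 r_l log n makes it (3 log n)-angle-dense, and it has at least
  (r_l / (6 delta_l))^(n-l) points, i.e.
    log N_l >= (n - l)(((1 - b) 2^-l log n - log (6 log n)) / 2 - log 6).
  Householder reflections move each layer into the orthogonal complement of the earlier path
  vectors, and the power constraint holds since sum_l r_l^2 <= L n^(1-b) = o(n).
*)
theory Submission
  imports Defs "HOL-Real_Asymp.Real_Asymp"
begin

section \<open>Euclidean geometry of R^n\<close>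

lemma inner_n_commute: "inner_n n x y = inner_n n y x"
  unfolding inner_n_def by (simp add: mult.commute)

lemma inner_n_diff_left: "inner_n n (x - y) z = inner_n n x z - inner_n n y z"
  unfolding inner_n_def by (simp add: algebra_simps sum_subtractf)

lemma inner_n_diff_right: "inner_n n z (x - y) = inner_n n z x - inner_n n z y"
  unfolding inner_n_def by (simp add: algebra_simps sum_subtractf)

lemma inner_n_diff_self: "inner_n n (x - y) (x - y) = inner_n n x x - 2 * inner_n n x y + inner_n n y y"
  by (simp add: inner_n_diff_left inner_n_diff_right inner_n_commute[of n y x])

lemma inner_n_diff_split: "inner_n n (y - a) v = inner_n n (y - u) v + inner_n n (u - a) v"
  unfolding inner_n_def by (simp add: algebra_simps flip: sum.distrib)

lemma inner_n_scale_left: "inner_n n (\<lambda>i. c * x i) y = c * inner_n n x y"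
  unfolding inner_n_def by (simp add: algebra_simps sum_distrib_left)

lemma inner_n_scale_right: "inner_n n y (\<lambda>i. c * x i) = c * inner_n n y x"
  unfolding inner_n_def by (simp add: algebra_simps sum_distrib_left)

lemma inner_n_lincomb_left:
  "inner_n n (\<lambda>i. \<alpha> * x i - \<beta> * y i) z = \<alpha> * inner_n n x z - \<beta> * inner_n n y z"
  unfolding inner_n_def by (simp add: algebra_simps sum_subtractf sum_distrib_left)

lemma inner_n_lincomb_right:
  "inner_n n z (\<lambda>i. \<alpha> * x i - \<beta> * y i) = \<alpha> * inner_n n z x - \<beta> * inner_n n z y"
  using inner_n_lincomb_left[of n \<alpha> x \<beta> y z] by (simp add: inner_n_commute)

lemma inner_n_lincomb_self:
  "inner_n n (\<lambda>i. \<alpha> * x i - \<beta> * y i) (\<lambda>i. \<alpha> * x i - \<beta> * y i) =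
     \<alpha>\<^sup>2 * inner_n n x x - 2 * \<alpha> * \<beta> * inner_n n x y + \<beta>\<^sup>2 * inner_n n y y"
  unfolding inner_n_def
  by (simp add: algebra_simps sum_subtractf sum.distrib sum_distrib_left power2_eq_square)

lemma inner_n_cong:
  "(\<And>i. i < n \<Longrightarrow> x i = x' i) \<Longrightarrow> (\<And>i. i < n \<Longrightarrow> y i = y' i) \<Longrightarrow>
     inner_n n x y = inner_n n x' y'"
  unfolding inner_n_def by (intro sum.cong) auto

lemma inner_n_indicator_right: "p < n \<Longrightarrow> inner_n n c (\<lambda>i. if i = p then 1 else 0) = c p"
  unfolding inner_n_def by (simp add: if_distrib cong: if_cong)

lemma inner_n_self_nonneg: "0 \<le> inner_n n x x"
  unfolding inner_n_def by (auto intro!: sum_nonneg)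

lemma inner_n_self_eq_0_iff: "inner_n n x x = 0 \<longleftrightarrow> (\<forall>i<n. x i = 0)"
  unfolding inner_n_def by (subst sum_nonneg_eq_0_iff) auto

lemma norm_n_nonneg: "0 \<le> norm_n n x"
  unfolding norm_n_def by (simp add: inner_n_self_nonneg)

lemma power2_norm_n: "(norm_n n x)\<^sup>2 = inner_n n x x"
  unfolding norm_n_def using inner_n_self_nonneg[of n x] by simp

lemma abs_inner_n_le_norm_n: "\<bar>inner_n n x y\<bar> \<le> norm_n n x * norm_n n y"
proof (rule power2_le_imp_le)
  have "(inner_n n x y)\<^sup>2 \<le> inner_n n x x * inner_n n y y"
    using Cauchy_Schwarz_ineq_sum[of x y "{..<n}"] by (simp add: inner_n_def power2_eq_square)
  then show "\<bar>inner_n n x y\<bar>\<^sup>2 \<le> (norm_n n x * norm_n n y)\<^sup>2"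
    by (simp add: power_mult_distrib power2_norm_n)
qed (simp add: norm_n_nonneg)

lemma norm_n_proj_n_minus:
  assumes "r > 0" "norm_n n a = r"
  shows "norm_n n (proj_n n a a' - a) = \<bar>inner_n n a a' / r\<^sup>2 - 1\<bar> * r"
proof -
  define c where "c = inner_n n a a' / r\<^sup>2"
  have "proj_n n a a' - a = (\<lambda>i. (c - 1) * a i)"
    unfolding proj_n_def c_def using assms by (auto simp: algebra_simps)
  moreover have "inner_n n (\<lambda>i. (c - 1) * a i) (\<lambda>i. (c - 1) * a i) = (c - 1)\<^sup>2 * r\<^sup>2"
    by (simp add: inner_n_scale_left inner_n_scale_right power2_norm_n[symmetric] assms
        power2_eq_square)
  ultimately show ?thesis
    unfolding norm_n_def c_def using assms by (simp add: real_sqrt_mult)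
qed

lemma inner_n_proj_n_minus_ge:
  assumes "r > 0" "norm_n n a = r" "norm_n n a' = r" "norm_n n (proj_n n a a' - a) \<ge> d"
  shows "r\<^sup>2 - inner_n n a a' \<ge> r * d"
proof -
  have "\<bar>inner_n n a a'\<bar> \<le> r\<^sup>2"
    using abs_inner_n_le_norm_n[of n a a'] assms by (simp add: power2_eq_square)
  then have "\<bar>inner_n n a a' / r\<^sup>2 - 1\<bar> = 1 - inner_n n a a' / r\<^sup>2"
    using assms(1) by (simp add: divide_le_eq_1)
  moreover have "(1 - inner_n n a a' / r\<^sup>2) * r = (r\<^sup>2 - inner_n n a a') / r"
    using assms(1) by (simp add: field_simps power2_eq_square)
  ultimately have "d \<le> (r\<^sup>2 - inner_n n a a') / r"
    using norm_n_proj_n_minus[OF assms(1,2), of a'] assms(4) by simp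
  then show ?thesis using assms(1) by (simp add: field_simps)
qed


lemma norm_n_proj_n_minus_ge:
  assumes r: "r > 0" "norm_n n a = r" "norm_n n a' = r"
    and sep: "inner_n n (a - a') (a - a') \<ge> 2 * r * d"
  shows "norm_n n (proj_n n a a' - a) \<ge> d"
proof -
  have aa: "inner_n n a a = r\<^sup>2" "inner_n n a' a' = r\<^sup>2"
    using r by (simp_all flip: power2_norm_n)
  have "inner_n n (a - a') (a - a') = 2 * r\<^sup>2 - 2 * inner_n n a a'"
    by (simp add: inner_n_diff_self aa)
  with sep have "2 * (d * r) \<le> 2 * (r\<^sup>2 - inner_n n a a')" by (simp add: algebra_simps)
  then have "d * r \<le> r\<^sup>2 - inner_n n a a'" by simp
  then have "d \<le> (r\<^sup>2 - inner_n n a a') / r"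
    using r(1) by (simp add: le_divide_eq)
  also have "\<dots> = (1 - inner_n n a a' / r\<^sup>2) * r"
    using r(1) by (simp add: field_simps power2_eq_square)
  also have "\<dots> \<le> \<bar>inner_n n a a' / r\<^sup>2 - 1\<bar> * r"
    using r(1) by (intro mult_right_mono) auto
  finally show ?thesis using norm_n_proj_n_minus[OF r(1,2)] by simp
qed

lemma diff_mult_sqrt_ge:
  fixes g W r t L :: real
  assumes g: "g \<ge> 3 * r * t" and W: "W \<ge> 0" "W\<^sup>2 \<le> L * r"
    and t: "t \<ge> 6 * L" "t > 0" and r: "r > 0"
  shows "g - W * sqrt (2 * g) \<ge> 2 * r * t"
proof -
  define x where "x = sqrt g"
  define x0 where "x0 = sqrt (3 * r * t)"
  have x0pos: "x0 \<ge> 0" unfolding x0_def using r t by simp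
  have gx: "g = x\<^sup>2" unfolding x_def using g r t
    by (metis mult_nonneg_nonneg order.trans real_sqrt_pow2 less_imp_le zero_le_numeral)
  have x0sq: "x0\<^sup>2 = 3 * r * t" unfolding x0_def using r t by simp
  have xx0: "x \<ge> x0" unfolding x_def x0_def using g by simp
  have "(sqrt 2 * W)\<^sup>2 \<le> x0\<^sup>2"
  proof -
    have "6 * (L * r) \<le> t * r" using t r by (simp add: mult_right_mono flip: mult.assoc)
    moreover have "0 < t * r" using t r by simp
    ultimately have "2 * (L * r) \<le> 3 * (t * r)" by linarith
    then show ?thesis using W x0sq by (simp add: power_mult_distrib mult_ac)
  qed
  then have w0: "sqrt 2 * W \<le> x0" using x0pos by (rule power2_le_imp_le)
  have e: "W * sqrt (2 * g) = sqrt 2 * W * x"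
    unfolding x_def by (simp add: real_sqrt_mult)
  have "g - W * sqrt (2 * g) = x * (x - sqrt 2 * W)"
    by (subst e) (simp add: gx power2_eq_square algebra_simps)
  also have "\<dots> \<ge> x0 * (x0 - sqrt 2 * W)"
    using xx0 w0 x0pos by (intro mult_mono) auto
  finally have A: "g - W * sqrt (2 * g) \<ge> 3 * r * t - sqrt 2 * W * x0"
    using x0sq by (simp add: power2_eq_square right_diff_distrib mult_ac)
  have "(sqrt 2 * W * x0)\<^sup>2 = 2 * W\<^sup>2 * (3 * r * t)"
    using x0sq by (simp add: power_mult_distrib)
  also have "\<dots> \<le> 2 * (L * r) * (3 * r * t)"
    using W r t by (intro mult_right_mono mult_left_mono) auto
  also have "\<dots> = (6 * L) * (r * r * t)" by (simp only: mult_ac)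
  also have "\<dots> \<le> t * (r * r * t)" using t r by (intro mult_right_mono) auto
  also have "\<dots> = (r * t)\<^sup>2" by (simp add: power2_eq_square)
  finally have "sqrt 2 * W * x0 \<le> r * t" by (rule power2_le_imp_le) (use r t in simp)
  then show ?thesis using A by linarith
qed

lemma inner_n_separated_offset_ge:
  assumes r: "r > 0" "norm_n n a = r" "norm_n n a' = r"
    and sep: "norm_n n (proj_n n a a' - a) \<ge> 3 * t"
    and w: "inner_n n w a' = 0" "(norm_n n w)\<^sup>2 \<le> L * r"
    and t: "t \<ge> 6 * L" "t > 0"
  shows "\<bar>inner_n n (\<lambda>i. w i + a' i - a i) a\<bar> \<ge> 2 * r * t"
proof -
  define \<iota> where "\<iota> = inner_n n a a'"
  define g where "g = r\<^sup>2 - \<iota>"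
  have "r\<^sup>2 - \<iota> \<ge> r * (3 * t)"
    unfolding \<iota>_def by (rule inner_n_proj_n_minus_ge[OF r sep])
  then have g: "g \<ge> 3 * r * t" unfolding g_def by simp
  \<comment> \<open>Since w is orthogonal to a', only the part a2 of a orthogonal to a' is seen by w,
    and a2 is short when a and a' are far apart.\<close>
  define a2 where "a2 = (\<lambda>i. 1 * a i - \<iota> / r\<^sup>2 * a' i)"
  have aa: "inner_n n a a = r\<^sup>2" "inner_n n a' a' = r\<^sup>2"
    using r by (simp_all add: power2_norm_n[symmetric])
  have "inner_n n w a2 = inner_n n w a"
    unfolding a2_def inner_n_lincomb_right w(1) by simp
  moreover have "inner_n n a2 a2 \<le> 2 * g"
  proof -
    have "inner_n n a2 a2 = r\<^sup>2 - \<iota>\<^sup>2 / r\<^sup>2"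
      unfolding a2_def inner_n_lincomb_self aa \<iota>_def[symmetric] using r(1)
      by (simp add: field_simps power2_eq_square)
    moreover have "0 \<le> (r - \<iota> / r)\<^sup>2" by simp
    then have "0 \<le> r\<^sup>2 - 2 * \<iota> + \<iota>\<^sup>2 / r\<^sup>2" using r(1) by (simp add: power2_eq_square field_simps)
    ultimately show ?thesis unfolding g_def by simp
  qed
  then have "norm_n n a2 \<le> sqrt (2 * g)" unfolding norm_n_def by simp
  ultimately have wa: "\<bar>inner_n n w a\<bar> \<le> norm_n n w * sqrt (2 * g)"
    using abs_inner_n_le_norm_n[of n w a2] norm_n_nonneg[of n w]
    by (metis mult_left_mono order.trans)
  have "inner_n n (\<lambda>i. w i + a' i - a i) a = inner_n n w a - g"
    unfolding g_def \<iota>_def aa(1)[symmetric] inner_n_def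
    by (simp add: algebra_simps sum.distrib sum_subtractf)
  moreover have "g - norm_n n w * sqrt (2 * g) \<ge> 2 * r * t"
    by (rule diff_mult_sqrt_ge[OF g norm_n_nonneg w(2) t r(1)])
  ultimately show ?thesis using wa by linarith
qed

section \<open>Gaussian channel outputs\<close>

lemma prob_space_gauss_out: "0 < \<sigma> \<Longrightarrow> prob_space (gauss_out n \<sigma> x)"
  unfolding gauss_out_def by (intro prob_space_PiM prob_space_normal_density)

lemma space_gauss_out: "space (gauss_out n \<sigma> x) = Rn n"
  unfolding gauss_out_def Rn_def by (simp add: space_PiM)

lemma sets_gauss_out: "sets (gauss_out n \<sigma> x) = sets (PiM {..<n} (\<lambda>_. borel))"
  unfolding gauss_out_def by (intro sets_PiM_cong) auto

lemma borel_measurable_inner_n_gauss_out[measurable]: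
  "(\<lambda>y. inner_n n (y - p) v) \<in> borel_measurable (gauss_out n \<sigma> x)"
proof -
  have "(\<lambda>y. inner_n n (y - p) v) = (\<lambda>y. \<Sum>i<n. (y i - p i) * v i)"
    by (simp add: inner_n_def)
  then show ?thesis unfolding gauss_out_def by simp
qed

lemma distributed_gauss_out_component:
  assumes "0 < \<sigma>" "i < n"
  shows "distributed (gauss_out n \<sigma> x) lborel (\<lambda>y. y i) (normal_density (x i) \<sigma>)"
proof -
  have "distr (gauss_out n \<sigma> x) lborel (\<lambda>y. y i) =
      distr (gauss_out n \<sigma> x) (density lborel (\<lambda>y. ennreal (normal_density (x i) \<sigma> y))) (\<lambda>y. y i)"
    by (intro distr_cong) auto
  also have "\<dots> = density lborel (\<lambda>y. ennreal (normal_density (x i) \<sigma> y))"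
    unfolding gauss_out_def
    by (rule distr_PiM_component[where M="\<lambda>i. density lborel (\<lambda>y. ennreal (normal_density (x i) \<sigma> y))", simplified])
       (use assms in \<open>auto intro: prob_space_normal_density\<close>)
  finally show ?thesis unfolding distributed_def
    using assms by (auto simp: gauss_out_def)
qed

lemma indep_vars_gauss_out_components:
  assumes "0 < \<sigma>" "n > 0"
  shows "prob_space.indep_vars (gauss_out n \<sigma> x) (\<lambda>_. borel) (\<lambda>i y. y i) {..<n}"
proof -
  interpret prob_space "gauss_out n \<sigma> x" by (rule prob_space_gauss_out[OF assms(1)])
  have comp: "distr (gauss_out n \<sigma> x) borel (\<lambda>y. y i) = density lborel (\<lambda>y. ennreal (normal_density (x i) \<sigma> y))"
    if "i < n" for i
  proof -
    have "distr (gauss_out n \<sigma> x) borel (\<lambda>y. y i) = distr (gauss_out n \<sigma> x) lborel (\<lambda>y. y i)"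
      by (intro distr_cong) auto
    then show ?thesis
      using distributed_gauss_out_component[OF assms(1) that, of x] by (simp add: distributed_def)
  qed
  have "distr (gauss_out n \<sigma> x) (PiM {..<n} (\<lambda>_. borel)) (\<lambda>y. \<lambda>i\<in>{..<n}. y i)
      = distr (gauss_out n \<sigma> x) (gauss_out n \<sigma> x) (\<lambda>y. y)"
    by (intro distr_cong) (auto simp: space_gauss_out sets_gauss_out Rn_def)
  also have "\<dots> = gauss_out n \<sigma> x" by simp
  also have "\<dots> = PiM {..<n} (\<lambda>i. distr (gauss_out n \<sigma> x) borel (\<lambda>y. y i))"
    using comp unfolding gauss_out_def by (intro PiM_cong) auto
  finally show ?thesis
    using assms by (subst indep_vars_iff_distr_eq_PiM') (auto simp: gauss_out_def)
qed

lemma distributed_gauss_out_inner_unit: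
  assumes s: "0 < \<sigma>" and e: "(\<Sum>i<n. (e i)\<^sup>2) = 1"
  shows "distributed (gauss_out n \<sigma> x) lborel (\<lambda>y. inner_n n (y - x) e / \<sigma>) std_normal_density"
proof -
  interpret prob_space "gauss_out n \<sigma> x" by (rule prob_space_gauss_out[OF s])
  \<comment> \<open>Only the coordinates with e i \<noteq> 0 contribute, and sum_indep_normal needs nondegenerate summands.\<close>
  define J where "J = {i. i < n \<and> e i \<noteq> 0}"
  have J: "finite J" "J \<subseteq> {..<n}" unfolding J_def by auto
  have "J \<noteq> {}"
  proof
    assume "J = {}"
    then have "\<And>i. i < n \<Longrightarrow> e i = 0" unfolding J_def by auto
    then show False using e by simp
  qed
  then have n: "n > 0" using J by auto
  have eJ: "(\<Sum>i\<in>J. (e i)\<^sup>2) = 1"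
    using e by (subst e[symmetric]) (rule sum.mono_neutral_left, auto simp: J_def)
  have inner: "inner_n n (y - x) e = (\<Sum>i\<in>J. (- x i * e i) + e i * y i)" for y
  proof -
    have "inner_n n (y - x) e = (\<Sum>i\<in>J. (y - x) i * e i)"
      unfolding inner_n_def by (rule sum.mono_neutral_right) (auto simp: J_def)
    then show ?thesis by (simp add: algebra_simps)
  qed
  have ind: "indep_vars (\<lambda>_. borel) (\<lambda>i y. (- x i * e i) + e i * y i) J"
    using indep_vars_compose2[OF indep_vars_subset[OF indep_vars_gauss_out_components[OF s n] J(2)],
        of "\<lambda>i z. (- x i * e i) + e i * z" "\<lambda>_. borel"]
    by auto
  have dist: "distributed (gauss_out n \<sigma> x) lborel (\<lambda>y. (- x i * e i) + e i * y i)
      (normal_density 0 (\<bar>e i\<bar> * \<sigma>))" if "i \<in> J" for i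
    using normal_density_affine[OF distributed_gauss_out_component[OF s, of i n x] s,
        of "e i" "- x i * e i"] that
    by (auto simp: J_def)
  have "distributed (gauss_out n \<sigma> x) lborel (\<lambda>y. \<Sum>i\<in>J. (- x i * e i) + e i * y i)
     (normal_density (\<Sum>i\<in>J. 0) (sqrt (\<Sum>i\<in>J. (\<bar>e i\<bar> * \<sigma>)\<^sup>2)))"
    by (rule sum_indep_normal[OF J(1) \<open>J \<noteq> {}\<close> ind]) (use s dist in \<open>auto simp: J_def\<close>)
  moreover have "(\<Sum>i\<in>J. (\<bar>e i\<bar> * \<sigma>)\<^sup>2) = \<sigma>\<^sup>2"
    using eJ by (simp add: power_mult_distrib flip: sum_distrib_right)
  ultimately have "distributed (gauss_out n \<sigma> x) lborel (\<lambda>y. inner_n n (y - x) e) (normal_density 0 \<sigma>)"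
    using s by (simp add: inner)
  from normal_density_affine[OF this s, of "1/\<sigma>" 0] s show ?thesis
    by (simp add: field_simps)
qed

lemma distributed_gauss_out_inner_normalized:
  assumes "norm_n n a > 0" "\<sigma> > 0"
  shows "distributed (gauss_out n \<sigma> x) lborel
    (\<lambda>y. inner_n n (y - x) a / norm_n n a / \<sigma>) std_normal_density"
proof -
  define r where "r = norm_n n a"
  have "(\<Sum>i<n. (1 / r * a i)\<^sup>2) = inner_n n (\<lambda>i. 1 / r * a i) (\<lambda>i. 1 / r * a i)"
    unfolding inner_n_def by (simp add: power2_eq_square)
  also have "\<dots> = 1 / r * (1 / r * (norm_n n a)\<^sup>2)"
    by (simp only: inner_n_scale_left inner_n_scale_right power2_norm_n)
  also have "\<dots> = 1"
    using assms(1) by (simp add: r_def power2_eq_square)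
  finally have "distributed (gauss_out n \<sigma> x) lborel
      (\<lambda>y. inner_n n (y - x) (\<lambda>i. 1 / r * a i) / \<sigma>) std_normal_density"
    by (rule distributed_gauss_out_inner_unit[OF assms(2)])
  then show ?thesis by (simp only: inner_n_scale_right) (simp add: r_def)
qed

lemma (in prob_space) measure_std_normal_le:
  assumes Z: "distributed M lborel Z std_normal_density"
  shows "measure M {y\<in>space M. Z y \<le> c} = Phi c"
proof -
  have m: "Z \<in> measurable M lborel" using Z by (simp add: distributed_def)
  have "measure M {y\<in>space M. Z y \<le> c} = measure M (Z -` {..c} \<inter> space M)"
    by (rule arg_cong[where f="measure M"]) auto
  also have "\<dots> = measure (distr M lborel Z) {..c}"
    by (rule measure_distr[symmetric]) (use m in auto)
  also have "\<dots> = Phi c" using Z unfolding distributed_def Phi_def by simp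
  finally show ?thesis .
qed

lemma (in prob_space) measure_std_normal_ge:
  assumes Z: "distributed M lborel Z std_normal_density"
  shows "measure M {y\<in>space M. Z y \<ge> c} = Phi (- c)"
proof -
  have "distributed M lborel (\<lambda>y. 0 + (-1) * Z y) (normal_density (0 + (-1) * 0) (\<bar>-1\<bar> * 1))"
    by (rule normal_density_affine[OF Z]) auto
  then have "measure M {y\<in>space M. 0 + (-1) * Z y \<le> - c} = Phi (- c)"
    by (intro measure_std_normal_le) simp
  then show ?thesis by (simp add: minus_le_iff)
qed

lemma (in prob_space) measure_std_normal_abs_ge:
  assumes Z: "distributed M lborel Z std_normal_density"
  shows "measure M {y\<in>space M. \<bar>Z y\<bar> \<ge> c} \<le> 2 * Phi (- c)"
proof -
  have [measurable]: "Z \<in> borel_measurable M" using Z by (simp add: distributed_def)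
  have "{y\<in>space M. \<bar>Z y\<bar> \<ge> c} = {y\<in>space M. Z y \<le> - c} \<union> {y\<in>space M. Z y \<ge> c}"
    by auto
  then have "measure M {y\<in>space M. \<bar>Z y\<bar> \<ge> c}
      \<le> measure M {y\<in>space M. Z y \<le> - c} + measure M {y\<in>space M. Z y \<ge> c}"
    using measure_subadditive[of "{y\<in>space M. Z y \<le> - c}" M "{y\<in>space M. Z y \<ge> c}"] by simp
  also have "\<dots> = 2 * Phi (- c)"
    using measure_std_normal_le[OF Z] measure_std_normal_ge[OF Z] by simp
  finally show ?thesis .
qed

lemma measure_gauss_out_inner_deviation_le:
  assumes "norm_n n a > 0" "\<sigma> > 0"
  shows "measure (gauss_out n \<sigma> x) {y \<in> Rn n. t * norm_n n a \<le> \<bar>inner_n n (y - x) a\<bar>}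
    \<le> 2 * Phi (- t / \<sigma>)"
proof -
  interpret prob_space "gauss_out n \<sigma> x" by (rule prob_space_gauss_out[OF assms(2)])
  have "{y \<in> Rn n. t * norm_n n a \<le> \<bar>inner_n n (y - x) a\<bar>}
      = {y \<in> space (gauss_out n \<sigma> x). t / \<sigma> \<le> \<bar>inner_n n (y - x) a / norm_n n a / \<sigma>\<bar>}"
    using assms by (auto simp: space_gauss_out abs_div divide_le_cancel le_divide_eq)
  also have "measure (gauss_out n \<sigma> x) \<dots> \<le> 2 * Phi (- (t / \<sigma>))"
    by (rule measure_std_normal_abs_ge[OF distributed_gauss_out_inner_normalized[OF assms]])
  finally show ?thesis by simp
qed

section \<open>Decoding an angle-dense tree\<close>

lemma length_idx: "s \<in> idx Ns L \<Longrightarrow> length s = L"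
  unfolding idx_def by auto

lemma take_in_idx: "s \<in> idx Ns L \<Longrightarrow> l \<le> L \<Longrightarrow> take l s \<in> idx Ns l"
  unfolding idx_def by auto

lemma nth_idx_less: "s \<in> idx Ns L \<Longrightarrow> k < L \<Longrightarrow> s ! k < Ns (k + 1)"
  unfolding idx_def by auto

lemma snoc_in_idx_iff: "s @ [t] \<in> idx Ns (Suc l) \<longleftrightarrow> s \<in> idx Ns l \<and> t < Ns (Suc l)"
  unfolding idx_def by (auto simp: nth_append less_Suc_eq)

lemma finite_idx: "finite (idx Ns L)"
proof -
  define M where "M = Max (Ns ` {1..L})"
  have "idx Ns L \<subseteq> {xs. set xs \<subseteq> {..M} \<and> length xs = L}"
  proof
    fix s assume s: "s \<in> idx Ns L"
    have "x \<le> M" if x: "x \<in> set s" for x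
    proof -
      obtain j where j: "j < L" "s ! j = x"
        using x s by (auto simp: in_set_conv_nth length_idx)
      have "Ns (j + 1) \<le> M" unfolding M_def using j by (intro Max_ge) auto
      then show ?thesis using nth_idx_less[OF s j(1)] j by simp
    qed
    then show "s \<in> {xs. set xs \<subseteq> {..M} \<and> length xs = L}"
      using s by (auto simp: length_idx)
  qed
  moreover have "finite {xs. set xs \<subseteq> {..M} \<and> length xs = L}"
    by (rule finite_lists_length_eq) simp
  ultimately show ?thesis by (rule finite_subset)
qed

lemma first_difference:
  "length s = length s' \<Longrightarrow> s \<noteq> s' \<Longrightarrow> \<exists>k<length s. take k s = take k s' \<and> s ! k \<noteq> s' ! k"
proof (induction s arbitrary: s')
  case (Cons x xs)
  then obtain y ys where s': "s' = y # ys" by (cases s') auto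
  show ?case
  proof (cases "x = y")
    case True
    then obtain k where "k < length xs" "take k xs = take k ys" "xs ! k \<noteq> ys ! k"
      using Cons s' by auto
    then show ?thesis using True s' by (intro exI[of _ "Suc k"]) auto
  qed (use s' in \<open>intro exI[of _ 0], auto\<close>)
qed simp

lemma path_vec_take: "j \<le> k \<Longrightarrow> path_vec pt (take k s) j = path_vec pt s j"
  unfolding path_vec_def by (simp add: min.absorb1)

lemma path_vec_Suc:
  "k < length s \<Longrightarrow> path_vec pt s (Suc k) = pt (take k s @ [s ! k]) - pt (take k s)"
  unfolding path_vec_def by (simp add: take_Suc_conv_app_nth)

lemma decoding_set_in_sets: "decoding_set n L pt s \<in> sets (gauss_out n \<sigma> x)"
proof -
  have "decoding_set n L pt s = {y \<in> space (gauss_out n \<sigma> x). \<forall>l\<in>{1..L}.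
      \<bar>inner_n n (y - pt (take l s)) (path_vec pt s l)\<bar> / norm_n n (path_vec pt s l) \<le> log 2 (real n)}"
    unfolding decoding_set_def space_gauss_out ..
  also have "\<dots> \<in> sets (gauss_out n \<sigma> x)" by measurable
  finally show ?thesis .
qed

locale angle_dense_tree =
  fixes n L :: nat and d :: real and r :: "nat \<Rightarrow> real" and Ns :: "nat \<Rightarrow> nat"
    and pt :: "nat list \<Rightarrow> nat \<Rightarrow> real"
  assumes construction: "angle_dense_construction n L d r Ns pt"
begin

lemma pt_Nil: "pt [] = origin n"
  using construction unfolding angle_dense_construction_def by simp

lemma childD:
  assumes "l < L" "s \<in> idx Ns l" "t < Ns (l + 1)"
  shows "pt (s @ [t]) \<in> Rn n" "norm_n n (pt (s @ [t]) - pt s) = r (l + 1)"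
    "\<And>j. j \<in> {1..l} \<Longrightarrow> inner_n n (path_vec pt s j) (pt (s @ [t]) - pt s) = 0"
  using construction assms unfolding angle_dense_construction_def by blast+

lemma angle_dense_children:
  assumes "l < L" "s \<in> idx Ns l" "j < Ns (l + 1)" "k < Ns (l + 1)" "j \<noteq> k"
  shows "d \<le> norm_n n (proj_n n (pt (s @ [k]) - pt s) (pt (s @ [j]) - pt s) - (pt (s @ [k]) - pt s))"
proof -
  have "angle_dense n d (pt s) (Ns (l + 1)) (\<lambda>t. pt (s @ [t]))"
    using construction assms(1,2) unfolding angle_dense_construction_def by blast
  then show ?thesis using assms(3-5) unfolding angle_dense_def by blast
qed

lemma path_vec_eq_child:
  "s \<in> idx Ns L \<Longrightarrow> k < L \<Longrightarrow> path_vec pt s (Suc k) = pt (take k s @ [s ! k]) - pt (take k s)"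
  by (simp add: path_vec_Suc length_idx)

lemma norm_path_vec:
  assumes "s \<in> idx Ns L" "l \<in> {1..L}"
  shows "norm_n n (path_vec pt s l) = r l"
proof -
  obtain k where k: "l = Suc k" "k < L" using assms(2) by (cases l) auto
  show ?thesis
    using childD(2)[OF k(2) take_in_idx[OF assms(1)] nth_idx_less[OF assms(1) k(2)]] k
      path_vec_eq_child[OF assms(1) k(2)]
    by simp
qed

lemma inner_path_vec_eq_0:
  assumes s: "s \<in> idx Ns L" and "j \<in> {1..L}" "m \<in> {1..L}" "j \<noteq> m"
  shows "inner_n n (path_vec pt s j) (path_vec pt s m) = 0"
proof -
  have *: "inner_n n (path_vec pt s j) (path_vec pt s m) = 0" if jm: "1 \<le> j" "j < m" "m \<le> L" for j m
  proof -
    obtain k where k: "m = Suc k" "k < L" using jm by (cases m) auto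
    have "inner_n n (path_vec pt (take k s) j) (pt (take k s @ [s ! k]) - pt (take k s)) = 0"
      using childD(3)[OF k(2) take_in_idx[OF s] nth_idx_less[OF s k(2)]] k jm by auto
    then show ?thesis using path_vec_eq_child[OF s k(2)] path_vec_take[of j k pt s] k jm by simp
  qed
  show ?thesis
    using *[of j m] *[of m j] assms by (cases "j < m") (auto simp: inner_n_commute)
qed

lemma inner_n_pt_take:
  assumes "s \<in> idx Ns L" "l \<le> L"
  shows "inner_n n (pt (take l s)) y = (\<Sum>j\<in>{1..l}. inner_n n (path_vec pt s j) y)"
  using assms(2)
proof (induction l)
  case 0
  then show ?case by (simp add: pt_Nil origin_def inner_n_def)
next
  case (Suc l)
  have "path_vec pt s (Suc l) = pt (take (Suc l) s) - pt (take l s)"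
    unfolding path_vec_def by simp
  then show ?case using Suc by (simp add: inner_n_diff_left)
qed

lemma inner_n_tail:
  assumes "s \<in> idx Ns L" "l \<le> L"
  shows "inner_n n (pt s - pt (take l s)) y = (\<Sum>j\<in>{l<..L}. inner_n n (path_vec pt s j) y)"
proof -
  have "{1..L} = {1..l} \<union> {l<..L}" using assms(2) by auto
  then have "(\<Sum>j\<in>{1..L}. inner_n n (path_vec pt s j) y)
      = (\<Sum>j\<in>{1..l}. inner_n n (path_vec pt s j) y) + (\<Sum>j\<in>{l<..L}. inner_n n (path_vec pt s j) y)"
    by (simp add: sum.union_disjoint ivl_disj_int)
  moreover have "take L s = s" using length_idx[OF assms(1)] by simp
  ultimately show ?thesis
    using inner_n_pt_take[OF assms(1) order.refl] inner_n_pt_take[OF assms]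
    by (simp add: inner_n_diff_left)
qed

lemma inner_n_tail_path_vec:
  assumes "s \<in> idx Ns L" "l \<in> {1..L}"
  shows "inner_n n (pt s - pt (take l s)) (path_vec pt s l) = 0"
  using assms by (subst inner_n_tail) (auto intro!: sum.neutral inner_path_vec_eq_0)

lemma norm_n_tail:
  assumes s: "s \<in> idx Ns L" and "l \<le> L"
  shows "(norm_n n (pt s - pt (take l s)))\<^sup>2 = (\<Sum>j\<in>{l<..L}. (r j)\<^sup>2)"
proof -
  have "inner_n n (path_vec pt s j) (pt s - pt (take l s)) = (r j)\<^sup>2" if j: "j \<in> {l<..L}" for j
  proof -
    have "inner_n n (path_vec pt s j) (pt s - pt (take l s))
        = (\<Sum>k\<in>{l<..L}. inner_n n (path_vec pt s k) (path_vec pt s j))"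
      by (subst inner_n_commute) (rule inner_n_tail[OF assms])
    also have "\<dots> = inner_n n (path_vec pt s j) (path_vec pt s j)"
      using j by (subst sum.remove[of _ j]) (auto intro!: sum.neutral inner_path_vec_eq_0[OF s])
    also have "\<dots> = (r j)\<^sup>2"
      using norm_path_vec[OF s, of j] j by (simp add: power2_norm_n[symmetric])
    finally show ?thesis .
  qed
  then show ?thesis
    by (simp add: power2_norm_n inner_n_tail[OF assms])
qed

lemma norm_n_codeword:
  assumes "s \<in> idx Ns L"
  shows "(norm_n n (pt s))\<^sup>2 = (\<Sum>j\<in>{1..L}. (r j)\<^sup>2)"
proof -
  have "norm_n n (pt s) = norm_n n (pt s - pt (take 0 s))"
    unfolding norm_n_def by (intro arg_cong[where f=sqrt] inner_n_cong) (auto simp: pt_Nil origin_def)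
  moreover have "{0<..L} = {1..L}" by auto
  ultimately show ?thesis using norm_n_tail[OF assms, of 0] by simp
qed

lemma codeword_in_Rn:
  assumes "s \<in> idx Ns L"
  shows "pt s \<in> Rn n"
proof (cases L)
  case 0
  then show ?thesis using length_idx[OF assms] by (simp add: pt_Nil origin_def Rn_def)
next
  case (Suc k)
  then have "s = take k s @ [s ! k]"
    using length_idx[OF assms] by (simp flip: take_Suc_conv_app_nth)
  then show ?thesis
    using childD(1)[OF _ take_in_idx[OF assms] nth_idx_less[OF assms], of k] Suc by (metis lessI le_SucI order.refl)
qed

end

lemma inner_deviation_set_in_sets:
  "{y \<in> Rn n. c \<le> \<bar>inner_n n (y - x) a\<bar>} \<in> sets (gauss_out n \<sigma> x')"
proof -
  have "{y \<in> Rn n. c \<le> \<bar>inner_n n (y - x) a\<bar>}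
      = {y \<in> space (gauss_out n \<sigma> x'). c \<le> \<bar>inner_n n (y - x) a\<bar>}"
    by (simp add: space_gauss_out)
  also have "\<dots> \<in> sets (gauss_out n \<sigma> x')" by measurable
  finally show ?thesis .
qed

context angle_dense_tree
begin

lemma measure_decoding_set_ge:
  assumes s: "s \<in> idx Ns L" and \<sigma>: "\<sigma> > 0" and t: "t = log 2 (real n)"
    and rpos: "\<forall>l\<in>{1..L}. r l > 0"
  shows "measure (gauss_out n \<sigma> (pt s)) (decoding_set n L pt s) \<ge> 1 - real L * (2 * Phi (- t / \<sigma>))"
proof -
  let ?M = "gauss_out n \<sigma> (pt s)" and ?D = "decoding_set n L pt s"
  interpret M: prob_space ?M by (rule prob_space_gauss_out[OF \<sigma>])
  define B where "B l = {y \<in> Rn n. t * norm_n n (path_vec pt s l) \<le> \<bar>inner_n n (y - pt s) (path_vec pt s l)\<bar>}"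
    for l
  have B_sets: "B l \<in> sets ?M" for l
    unfolding B_def by (rule inner_deviation_set_in_sets)
  \<comment> \<open>The tail of pt s beyond layer l is orthogonal to the l-th path vector, so each test
    of the decoder sees only noise.\<close>
  have "space ?M - ?D \<subseteq> (\<Union>l\<in>{1..L}. B l)"
  proof
    fix y assume y: "y \<in> space ?M - ?D"
    then obtain l where l: "l \<in> {1..L}" and
      gt: "t < \<bar>inner_n n (y - pt (take l s)) (path_vec pt s l)\<bar> / norm_n n (path_vec pt s l)"
      unfolding decoding_set_def space_gauss_out t by auto
    have "inner_n n (y - pt (take l s)) (path_vec pt s l) = inner_n n (y - pt s) (path_vec pt s l)"
      using inner_n_diff_split[of n y "pt (take l s)" "path_vec pt s l" "pt s"]
        inner_n_tail_path_vec[OF s l] by simp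
    moreover have "norm_n n (path_vec pt s l) > 0" using norm_path_vec[OF s l] rpos l by auto
    ultimately have "y \<in> B l" using gt y by (auto simp: B_def space_gauss_out less_divide_eq)
    then show "y \<in> (\<Union>l\<in>{1..L}. B l)" using l by auto
  qed
  then have "M.prob (space ?M - ?D) \<le> M.prob (\<Union>l\<in>{1..L}. B l)"
    using B_sets by (intro M.finite_measure_mono) auto
  also have "\<dots> \<le> (\<Sum>l\<in>{1..L}. M.prob (B l))"
    using B_sets by (intro measure_subadditive_finite) auto
  also have "\<dots> \<le> (\<Sum>l\<in>{1..L}. 2 * Phi (- t / \<sigma>))"
    unfolding B_def using norm_path_vec[OF s] rpos \<sigma>
    by (intro sum_mono measure_gauss_out_inner_deviation_le) auto
  finally have "M.prob (space ?M - ?D) \<le> real L * (2 * Phi (- t / \<sigma>))" by simp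
  moreover have "M.prob (space ?M - ?D) = 1 - M.prob ?D"
    by (rule M.prob_compl) (rule decoding_set_in_sets)
  ultimately show ?thesis by simp
qed

lemma codeword_offset_inner_ge:
  assumes s: "s \<in> idx Ns L" and s': "s' \<in> idx Ns L"
    and k: "k < L" "take k s = take k s'" "s ! k \<noteq> s' ! k"
    and d: "d = 3 * t" and t: "t > 0" "t \<ge> 6 * real L"
    and rpos: "\<forall>l\<in>{1..L}. r l > 0"
    and rtail: "\<forall>l\<in>{1..L}. (\<Sum>j\<in>{l<..L}. (r j)\<^sup>2) \<le> real L * r l"
  shows "\<bar>inner_n n (pt s' - pt (take (Suc k) s)) (path_vec pt s (Suc k))\<bar> \<ge> 2 * r (Suc k) * t"
proof -
  define l where "l = Suc k"
  have l: "l \<in> {1..L}" using k unfolding l_def by auto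
  define a where "a = path_vec pt s l"
  define a' where "a' = path_vec pt s' l"
  define w where "w = pt s' - pt (take l s')"
  have a: "a = pt (take k s @ [s ! k]) - pt (take k s)"
    unfolding a_def l_def by (rule path_vec_eq_child[OF s k(1)])
  have a': "a' = pt (take k s @ [s' ! k]) - pt (take k s)"
    unfolding a'_def l_def k(2) by (rule path_vec_eq_child[OF s' k(1)])
  have "d \<le> norm_n n (proj_n n a a' - a)"
    unfolding a a' using k(3)
    by (intro angle_dense_children[OF k(1) take_in_idx[OF s less_imp_le[OF k(1)]]]
        nth_idx_less[OF s k(1)] nth_idx_less[OF s' k(1)]) simp
  moreover have "(norm_n n w)\<^sup>2 \<le> real L * r l"
    unfolding w_def using norm_n_tail[OF s', of l] l rtail by auto
  ultimately have "\<bar>inner_n n (\<lambda>i. w i + a' i - a i) a\<bar> \<ge> 2 * r l * t"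
    using inner_n_separated_offset_ge[of "r l" n a a' t w "real L"] rpos l t d
      norm_path_vec[OF s l] norm_path_vec[OF s' l] inner_n_tail_path_vec[OF s' l]
    unfolding a_def a'_def w_def by simp
  moreover have "inner_n n (pt s' - pt (take l s)) a = inner_n n (\<lambda>i. w i + a' i - a i) a"
    unfolding w_def a'_def a_def path_vec_def l_def using k(2) by (intro inner_n_cong) simp_all
  ultimately show ?thesis unfolding a_def l_def by simp
qed

lemma measure_decoding_set_other_le:
  assumes s: "s \<in> idx Ns L" and s': "s' \<in> idx Ns L" and ne: "s \<noteq> s'"
    and \<sigma>: "\<sigma> > 0" and d: "d = 3 * t" and t: "t > 0" "t \<ge> 6 * real L" "t = log 2 (real n)"
    and rpos: "\<forall>l\<in>{1..L}. r l > 0"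
    and rtail: "\<forall>l\<in>{1..L}. (\<Sum>j\<in>{l<..L}. (r j)\<^sup>2) \<le> real L * r l"
  shows "measure (gauss_out n \<sigma> (pt s')) (decoding_set n L pt s) \<le> 2 * Phi (- t / \<sigma>)"
proof -
  let ?M = "gauss_out n \<sigma> (pt s')"
  interpret M: prob_space ?M by (rule prob_space_gauss_out[OF \<sigma>])
  obtain k where k: "k < L" "take k s = take k s'" "s ! k \<noteq> s' ! k"
    using first_difference[of s s'] length_idx[OF s] length_idx[OF s'] ne by auto
  define l where "l = Suc k"
  have l: "l \<in> {1..L}" using k unfolding l_def by auto
  define a where "a = path_vec pt s l"
  have na: "norm_n n a = r l" "r l > 0"
    unfolding a_def using norm_path_vec[OF s l] rpos l by auto
  have far: "\<bar>inner_n n (pt s' - pt (take l s)) a\<bar> \<ge> 2 * r l * t"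
    unfolding a_def l_def by (rule codeword_offset_inner_ge[OF s s' k d t(1,2) rpos rtail])
  have "decoding_set n L pt s \<subseteq> {y \<in> Rn n. t * norm_n n a \<le> \<bar>inner_n n (y - pt s') a\<bar>}"
  proof
    fix y assume "y \<in> decoding_set n L pt s"
    then have "y \<in> Rn n" "\<bar>inner_n n (y - pt (take l s)) a\<bar> / norm_n n a \<le> t"
      unfolding decoding_set_def a_def using l t(3) by auto
    then have y: "y \<in> Rn n" "\<bar>inner_n n (y - pt (take l s)) a\<bar> \<le> t * r l"
      using na by (simp_all add: divide_le_eq)
    have "inner_n n (y - pt (take l s)) a = inner_n n (y - pt s') a + inner_n n (pt s' - pt (take l s)) a"
      by (rule inner_n_diff_split)
    moreover have "2 * r l * t = 2 * (t * r l)" by simp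
    ultimately have "t * r l \<le> \<bar>inner_n n (y - pt s') a\<bar>" using y(2) far by arith
    then show "y \<in> {y \<in> Rn n. t * norm_n n a \<le> \<bar>inner_n n (y - pt s') a\<bar>}"
      using y(1) na by simp
  qed
  then have "M.prob (decoding_set n L pt s)
      \<le> M.prob {y \<in> Rn n. t * norm_n n a \<le> \<bar>inner_n n (y - pt s') a\<bar>}"
    by (intro M.finite_measure_mono inner_deviation_set_in_sets)
  also have "\<dots> \<le> 2 * Phi (- t / \<sigma>)"
    using na \<sigma> by (intro measure_gauss_out_inner_deviation_le) auto
  finally show ?thesis .
qed

lemma DI_code_decoding_set:
  assumes \<sigma>: "\<sigma> > 0" and d: "d = 3 * t" and t: "t > 0" "t \<ge> 6 * real L" "t = log 2 (real n)"
    and rpos: "\<forall>l\<in>{1..L}. r l > 0"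
    and rtail: "\<forall>l\<in>{1..L}. (\<Sum>j\<in>{l<..L}. (r j)\<^sup>2) \<le> real L * r l"
    and power: "(\<Sum>j\<in>{1..L}. (r j)\<^sup>2) \<le> real n * P"
  shows "DI_code n P \<sigma> (idx Ns L) pt (decoding_set n L pt)
    (real L * (2 * Phi (- t / \<sigma>))) (2 * Phi (- t / \<sigma>))"
  unfolding DI_code_def
  using finite_idx codeword_in_Rn norm_n_codeword power decoding_set_in_sets
    measure_decoding_set_ge[OF _ \<sigma> t(3) rpos] measure_decoding_set_other_le[OF _ _ _ \<sigma> d t rpos rtail]
  by auto

end

section \<open>Packings of integer cubes\<close>

lemma greedy_independent_subset:
  assumes "finite A" and refl: "\<And>x. x \<in> A \<Longrightarrow> R x x" and sym: "\<And>x y. R x y \<Longrightarrow> R y x"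
    and nb: "\<And>x. x \<in> A \<Longrightarrow> card {y\<in>A. R x y} \<le> B"
  shows "\<exists>S\<subseteq>A. card A \<le> card S * B \<and> (\<forall>x\<in>S. \<forall>y\<in>S. x \<noteq> y \<longrightarrow> \<not> R x y)"
  using assms(1) nb refl
proof (induction "card A" arbitrary: A rule: less_induct)
  case less
  show ?case
  proof (cases "A = {}")
    case False
    then obtain x where x: "x \<in> A" by auto
    define N where "N = {y\<in>A. R x y}"
    define A' where "A' = A - N"
    have xN: "x \<in> N" unfolding N_def using x less(4) by auto
    have N: "N \<subseteq> A" "finite N" unfolding N_def using less(2) by auto
    have "card A' < card A" unfolding A'_def using xN N less(2) by (intro psubset_card_mono) auto
    moreover have "card {y\<in>A'. R z y} \<le> B" if "z \<in> A'" for z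
    proof -
      have "card {y\<in>A'. R z y} \<le> card {y\<in>A. R z y}"
        using less(2) unfolding A'_def by (intro card_mono) auto
      then show ?thesis using less(3)[of z] that unfolding A'_def by auto
    qed
    ultimately obtain S' where S': "S' \<subseteq> A'" "card A' \<le> card S' * B"
        "\<forall>u\<in>S'. \<forall>v\<in>S'. u \<noteq> v \<longrightarrow> \<not> R u v"
      using less(1)[of A'] less(2,4) unfolding A'_def by auto
    have xS': "x \<notin> S'" using S'(1) xN unfolding A'_def by auto
    have fS': "finite S'" using S'(1) less(2) unfolding A'_def by (auto intro: finite_subset)
    have "card A = card A' + card N"
      unfolding A'_def using N less(2) by (simp add: card_Diff_subset card_mono)
    also have "\<dots> \<le> card S' * B + B" using S'(2) less(3)[OF x] unfolding N_def by simp
    also have "\<dots> = card (insert x S') * B" using xS' fS' by simp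
    finally have "card A \<le> card (insert x S') * B" .
    moreover have "\<not> R x v" if "v \<in> S'" for v using S'(1) that unfolding A'_def N_def by auto
    then have "\<forall>u\<in>insert x S'. \<forall>v\<in>insert x S'. u \<noteq> v \<longrightarrow> \<not> R u v"
      using S'(3) sym by blast
    moreover have "insert x S' \<subseteq> A" using S'(1) x unfolding A'_def by auto
    ultimately show ?thesis by blast
  qed auto
qed

definition int_cube :: "nat \<Rightarrow> nat \<Rightarrow> (nat \<Rightarrow> int) set" where
  "int_cube m K = PiE {..<m} (\<lambda>_. {- int K..int K})"

lemma finite_int_cube: "finite (int_cube m K)"
  unfolding int_cube_def by (intro finite_PiE) auto

lemma card_int_cube: "card (int_cube m K) = (2 * K + 1) ^ m"
  unfolding int_cube_def by (subst card_PiE) (auto simp: nat_add_distrib nat_mult_distrib)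

lemma sum_half_power_abs_int:
  "(\<Sum>j\<in>{- int M..int M}. (1/2::real) ^ nat \<bar>j\<bar>) = 3 - 2 * (1/2) ^ M"
proof (induction M)
  case (Suc M)
  have "{- int (Suc M)..int (Suc M)} = insert (- int (Suc M)) (insert (int (Suc M)) {- int M..int M})"
    by auto
  moreover have "nat \<bar>- int (Suc M)\<bar> = Suc M" "nat \<bar>int (Suc M)\<bar> = Suc M" by auto
  ultimately have "(\<Sum>j\<in>{- int (Suc M)..int (Suc M)}. (1/2::real) ^ nat \<bar>j\<bar>)
     = (1/2) ^ Suc M + ((1/2) ^ Suc M + (\<Sum>j\<in>{- int M..int M}. (1/2::real) ^ nat \<bar>j\<bar>))"
    by (simp only:) (subst sum.insert, simp, simp, subst sum.insert, simp_all)
  then show ?case using Suc by simp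
qed simp

lemma card_int_cube_small_sum_squares:
  "card {z \<in> int_cube m M. (\<Sum>i<m. (z i)\<^sup>2) < int m} \<le> 6 ^ m"
proof -
  define Z where "Z = {z \<in> int_cube m M. (\<Sum>i<m. (z i)\<^sup>2) < int m}"
  \<comment> \<open>Each z in Z has l1-norm at most m, hence weight w z at least 1, while the total
    weight of the cube factorizes and is at most 6^m.\<close>
  define w where "w = (\<lambda>z. (2::real) ^ m * (\<Prod>i<m. (1/2::real) ^ nat \<bar>z i\<bar>))"
  have "real (card Z) = (\<Sum>z\<in>Z. (1::real))" by simp
  also have "\<dots> \<le> (\<Sum>z\<in>Z. w z)"
  proof (rule sum_mono)
    fix z assume z: "z \<in> Z"
    have "int (\<Sum>i<m. nat \<bar>z i\<bar>) = (\<Sum>i<m. \<bar>z i\<bar>)" by simp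
    also have "\<dots> \<le> (\<Sum>i<m. (z i)\<^sup>2)"
    proof (rule sum_mono)
      fix i
      have "\<bar>z i\<bar> * 1 \<le> \<bar>z i\<bar> * \<bar>z i\<bar>" if "z i \<noteq> 0"
        using that by (intro mult_left_mono) auto
      then show "\<bar>z i\<bar> \<le> (z i)\<^sup>2"
        by (cases "z i = 0") (auto simp: power2_eq_square abs_mult_self_eq)
    qed
    also have "\<dots> < int m" using z unfolding Z_def by simp
    finally have "(\<Sum>i<m. nat \<bar>z i\<bar>) \<le> m" by linarith
    then have "(1/2::real) ^ m \<le> (\<Prod>i<m. (1/2::real) ^ nat \<bar>z i\<bar>)"
      by (simp add: power_sum[symmetric] power_decreasing)
    then show "1 \<le> w z" unfolding w_def by (simp add: power_one_over field_simps)
  qed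
  also have "\<dots> \<le> (\<Sum>z\<in>int_cube m M. w z)"
    unfolding Z_def w_def by (intro sum_mono2 finite_int_cube) (auto intro!: mult_nonneg_nonneg prod_nonneg)
  also have "\<dots> = 2 ^ m * (\<Prod>i<m. \<Sum>j\<in>{- int M..int M}. (1/2::real) ^ nat \<bar>j\<bar>)"
    unfolding w_def int_cube_def by (subst prod_sum_PiE) (auto simp: sum_distrib_left)
  also have "\<dots> \<le> 2 ^ m * 3 ^ m"
    using power_le_one[of "1/2::real" M] by (simp add: sum_half_power_abs_int power_mono)
  also have "\<dots> = 6 ^ m" by (simp add: power_mult_distrib[symmetric])
  finally show ?thesis unfolding Z_def by (simp flip: of_nat_le_iff)
qed

lemma card_int_cube_neighbours:
  assumes k: "k \<in> int_cube m K"
  shows "card {k' \<in> int_cube m K. (\<Sum>i<m. (k i - k' i)\<^sup>2) < int m} \<le> 6 ^ m"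
proof -
  let ?N = "{k' \<in> int_cube m K. (\<Sum>i<m. (k i - k' i)\<^sup>2) < int m}"
  define f where "f = (\<lambda>k'. \<lambda>i\<in>{..<m}. k' i - k i)"
  have "inj_on f ?N"
  proof (rule inj_onI)
    fix x y assume "x \<in> ?N" "y \<in> ?N" and e: "f x = f y"
    moreover have "x i = y i" if "i < m" for i
      using fun_cong[OF e, of i] that unfolding f_def by simp
    ultimately show "x = y"
      unfolding int_cube_def by (intro PiE_ext[of x "{..<m}" _ y]) auto
  qed
  moreover have "f ` ?N \<subseteq> {z \<in> int_cube m (2 * K). (\<Sum>i<m. (z i)\<^sup>2) < int m}"
  proof
    fix z assume "z \<in> f ` ?N"
    then obtain k' where k': "k' \<in> int_cube m K" "(\<Sum>i<m. (k i - k' i)\<^sup>2) < int m"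
      and z: "z = f k'" by auto
    have "z i \<in> {- int (2 * K)..int (2 * K)}" if i: "i < m" for i
    proof -
      have "k i \<in> {- int K..int K}" "k' i \<in> {- int K..int K}"
        using PiE_mem[OF k[unfolded int_cube_def], of i] PiE_mem[OF k'(1)[unfolded int_cube_def], of i] i
        by simp_all
      then show ?thesis unfolding z f_def using i by simp
    qed
    then have "z \<in> int_cube m (2 * K)"
      unfolding int_cube_def z f_def by (auto simp: PiE_iff)
    moreover have "(\<Sum>i<m. (z i)\<^sup>2) = (\<Sum>i<m. (k i - k' i)\<^sup>2)"
      unfolding z f_def by (intro sum.cong) (auto simp: power2_commute)
    ultimately show "z \<in> {z \<in> int_cube m (2 * K). (\<Sum>i<m. (z i)\<^sup>2) < int m}"
      using k'(2) by simp
  qed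
  moreover have "finite {z \<in> int_cube m (2 * K). (\<Sum>i<m. (z i)\<^sup>2) < int m}"
    using finite_int_cube by simp
  ultimately have "card ?N \<le> card {z \<in> int_cube m (2 * K). (\<Sum>i<m. (z i)\<^sup>2) < int m}"
    by (rule card_inj_on_le)
  also have "\<dots> \<le> 6 ^ m" by (rule card_int_cube_small_sum_squares)
  finally show ?thesis .
qed

definition int_cube_packing :: "nat \<Rightarrow> nat \<Rightarrow> (nat \<Rightarrow> int) set \<Rightarrow> bool" where
  "int_cube_packing m K S \<longleftrightarrow> S \<subseteq> int_cube m K \<and> (2 * K + 1) ^ m \<le> card S * 6 ^ m \<and>
     (\<forall>k\<in>S. \<forall>k'\<in>S. k \<noteq> k' \<longrightarrow> int m \<le> (\<Sum>i<m. (k i - k' i)\<^sup>2))"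

lemma int_cube_packing_exists:
  assumes "m > 0"
  shows "\<exists>S. int_cube_packing m K S"
proof -
  define R where "R = (\<lambda>k k' :: nat \<Rightarrow> int. (\<Sum>i<m. (k i - k' i)\<^sup>2) < int m)"
  have "\<exists>S\<subseteq>int_cube m K. card (int_cube m K) \<le> card S * 6 ^ m \<and>
      (\<forall>x\<in>S. \<forall>y\<in>S. x \<noteq> y \<longrightarrow> \<not> R x y)"
  proof (rule greedy_independent_subset[OF finite_int_cube])
    show "R k k" for k unfolding R_def using assms by simp
    show "R k' k" if "R k k'" for k k'
      using that unfolding R_def by (simp add: power2_commute)
    show "card {k' \<in> int_cube m K. R k k'} \<le> 6 ^ m" if "k \<in> int_cube m K" for k
      unfolding R_def by (rule card_int_cube_neighbours[OF that])
  qed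
  then show ?thesis unfolding int_cube_packing_def card_int_cube R_def by (auto simp: not_less)
qed

section \<open>Householder reflections and layered codebooks\<close>

definition householder :: "nat \<Rightarrow> (nat \<Rightarrow> real) \<Rightarrow> (nat \<Rightarrow> real) \<Rightarrow> (nat \<Rightarrow> real)" where
  "householder n u v =
    (if inner_n n u u = 0 then v else (\<lambda>i. v i - 2 * inner_n n u v / inner_n n u u * u i))"

lemma householder_nonzero:
  "inner_n n u u \<noteq> 0 \<Longrightarrow>
    householder n u v = (\<lambda>i. 1 * v i - 2 * inner_n n u v / inner_n n u u * u i)"
  unfolding householder_def by simp

lemma inner_n_householder: "inner_n n (householder n u x) (householder n u y) = inner_n n x y"
proof (cases "inner_n n u u = 0")
  case False
  define a where "a = 2 * inner_n n u x / inner_n n u u"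
  define b where "b = 2 * inner_n n u y / inner_n n u u"
  have "inner_n n (householder n u x) (householder n u y)
      = inner_n n x y - b * inner_n n x u - a * inner_n n u y + a * b * inner_n n u u"
    unfolding householder_nonzero[OF False] a_def[symmetric] b_def[symmetric]
      inner_n_lincomb_left inner_n_lincomb_right
    by (simp add: algebra_simps inner_n_commute[of n u x])
  also have "\<dots> = inner_n n x y"
    using False unfolding a_def b_def by (simp add: inner_n_commute[of n x u] field_simps)
  finally show ?thesis .
qed (simp add: householder_def)

lemma inner_n_householder_right: "inner_n n x (householder n u y) = inner_n n (householder n u x) y"
proof (cases "inner_n n u u = 0")
  case False
  show ?thesis
    unfolding householder_nonzero[OF False] inner_n_lincomb_left inner_n_lincomb_right
    by (simp add: inner_n_commute[of n x u])
qed (simp add: householder_def)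

lemma householder_eq_0:
  "(\<And>i. a \<le> i \<Longrightarrow> i < n \<Longrightarrow> u i = 0) \<Longrightarrow> (\<And>i. a \<le> i \<Longrightarrow> i < n \<Longrightarrow> v i = 0) \<Longrightarrow>
    a \<le> i \<Longrightarrow> i < n \<Longrightarrow> householder n u v i = 0"
  unfolding householder_def by auto

lemma householder_to_axis:
  assumes cc: "inner_n n c c = r\<^sup>2" and r: "r > 0" and p: "p < n" and i: "i < n"
  defines "e \<equiv> (\<lambda>i. if i = p then 1 else 0)"
  shows "householder n (\<lambda>i. 1 / r * c i - 1 * e i) c i = r * e i"
proof -
  define u where "u = (\<lambda>i. 1 / r * c i - 1 * e i)"
  have "householder n u c i = r * e i"
  proof (cases "inner_n n u u = 0")
    case True
    then have "c i / r = e i" using i unfolding u_def by (simp add: inner_n_self_eq_0_iff)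
    then show ?thesis using True r unfolding householder_def by (simp add: field_simps)
  next
    case False
    have ce: "inner_n n c e = c p" "inner_n n e c = c p" "inner_n n e e = 1"
      unfolding e_def using inner_n_indicator_right[OF p] by (simp_all add: inner_n_commute[of n _ c])
    have uc: "inner_n n u c = r - c p"
      unfolding u_def inner_n_lincomb_left using cc ce r by (simp add: power2_eq_square)
    have uu: "inner_n n u u = 2 * (r - c p) / r"
      unfolding u_def inner_n_lincomb_self using cc ce r by (simp add: field_simps power2_eq_square)
    have "r - c p \<noteq> 0" using False uu by auto
    then have "2 * inner_n n u c / inner_n n u u = r" unfolding uc uu using r by (simp add: field_simps)
    then have "householder n u c i = c i - r * u i"
      unfolding householder_nonzero[OF False] by simp
    also have "\<dots> = r * e i" unfolding u_def using r by (simp add: field_simps)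
    finally show ?thesis .
  qed
  then show ?thesis unfolding u_def .
qed

text \<open>The path vector to the child t of a node s of length l is frame s (C (l + 1) t), where
  frame s composes the Householder reflections that map each earlier path vector C j (s ! (j - 1))
  onto the axis vector rad j e(n - j). Since frame s is an isometry, siblings stay angle-dense, and
  vectors supported on the first n - l coordinates are mapped orthogonally to all earlier path
  vectors.\<close>

locale layered_codebooks =
  fixes n L :: nat and C :: "nat \<Rightarrow> nat \<Rightarrow> nat \<Rightarrow> real" and rad :: "nat \<Rightarrow> real"
    and Ns :: "nat \<Rightarrow> nat" and d :: real
  assumes L_less: "L < n"
    and rad_pos: "\<And>l. l \<in> {1..L} \<Longrightarrow> rad l > 0"
    and inner_n_C: "\<And>l t. l \<in> {1..L} \<Longrightarrow> t < Ns l \<Longrightarrow> inner_n n (C l t) (C l t) = (rad l)\<^sup>2"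
    and C_eq_0: "\<And>l t i. l \<in> {1..L} \<Longrightarrow> t < Ns l \<Longrightarrow> n - l < i \<Longrightarrow> C l t i = 0"
    and C_separated: "\<And>l t t'. l \<in> {1..L} \<Longrightarrow> t < Ns l \<Longrightarrow> t' < Ns l \<Longrightarrow> t \<noteq> t' \<Longrightarrow>
       inner_n n (C l t - C l t') (C l t - C l t') \<ge> 2 * rad l * d"
begin

definition reflection :: "nat \<Rightarrow> nat \<Rightarrow> (nat \<Rightarrow> real) \<Rightarrow> nat \<Rightarrow> real" where
  "reflection l t = householder n (\<lambda>i. 1 / rad l * C l t i - 1 * (if i = n - l then 1 else 0))"

fun frame_rev :: "nat list \<Rightarrow> (nat \<Rightarrow> real) \<Rightarrow> nat \<Rightarrow> real" where
  "frame_rev [] v = v"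
| "frame_rev (t # rs) v = frame_rev rs (reflection (length rs + 1) t v)"

definition frame :: "nat list \<Rightarrow> (nat \<Rightarrow> real) \<Rightarrow> nat \<Rightarrow> real" where
  "frame s = frame_rev (rev s)"

definition node :: "nat list \<Rightarrow> nat \<Rightarrow> real" where
  "node s = (\<lambda>i\<in>{..<n}. \<Sum>j<length s. frame (take j s) (C (j + 1) (s ! j)) i)"

lemma frame_Nil [simp]: "frame [] v = v"
  unfolding frame_def by simp

lemma frame_snoc: "frame (s @ [t]) v = frame s (reflection (length s + 1) t v)"
  unfolding frame_def by simp

lemma inner_n_frame: "inner_n n (frame s x) (frame s y) = inner_n n x y"
  by (induction s arbitrary: x y rule: rev_induct)
    (simp_all add: frame_snoc reflection_def inner_n_householder)

lemma reflection_eq_0: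
  assumes "l \<in> {1..L}" "t < Ns l" "\<And>i. n - l < i \<Longrightarrow> i < n \<Longrightarrow> v i = 0" "n - l < i" "i < n"
  shows "reflection l t v i = 0"
  unfolding reflection_def using assms C_eq_0 by (intro householder_eq_0[of "n - l + 1"]) auto

lemma inner_n_C_reflection:
  assumes "l \<in> {1..L}" "t < Ns l" "v (n - l) = 0"
  shows "inner_n n (C l t) (reflection l t v) = 0"
proof -
  have "inner_n n (C l t) (reflection l t v)
      = inner_n n (\<lambda>i. rad l * (if i = n - l then 1 else 0)) v"
    unfolding reflection_def inner_n_householder_right
    using householder_to_axis[OF inner_n_C[OF assms(1,2)] rad_pos[OF assms(1)]] L_less assms(1)
    by (intro inner_n_cong) auto
  also have "\<dots> = rad l * v (n - l)"
    using inner_n_indicator_right[of "n - l" n v] L_less assms(1)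
    by (simp add: inner_n_scale_left inner_n_commute[of n _ v])
  finally show ?thesis using assms(3) by simp
qed

lemma node_Nil: "node [] = origin n"
  unfolding node_def origin_def by simp

lemma node_in_Rn: "node s \<in> Rn n"
  unfolding node_def Rn_def by simp

lemma node_snoc: "i < n \<Longrightarrow> node (s @ [t]) i - node s i = frame s (C (length s + 1) t) i"
proof -
  have "(\<Sum>j<length s. frame (take j (s @ [t])) (C (j + 1) ((s @ [t]) ! j)) i)
      = (\<Sum>j<length s. frame (take j s) (C (j + 1) (s ! j)) i)"
    by (intro sum.cong) (auto simp: nth_append)
  then show "i < n \<Longrightarrow> ?thesis" by (simp add: node_def)
qed

lemma path_vec_node_snoc: "j \<le> length s \<Longrightarrow> path_vec node (s @ [t]) j = path_vec node s j"
  unfolding path_vec_def by simp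

lemma inner_n_node_snoc_left:
  "inner_n n (node (s @ [t]) - node s) y = inner_n n (frame s (C (length s + 1) t)) y"
  by (intro inner_n_cong) (simp_all add: node_snoc)

lemma inner_n_node_snoc_right:
  "inner_n n y (node (s @ [t]) - node s) = inner_n n y (frame s (C (length s + 1) t))"
  by (intro inner_n_cong) (simp_all add: node_snoc)

lemma inner_n_node_snoc:
  "inner_n n (node (s @ [t]) - node s) (node (s @ [t']) - node s) =
    inner_n n (C (length s + 1) t) (C (length s + 1) t')"
  by (simp add: inner_n_node_snoc_left inner_n_node_snoc_right inner_n_frame)

lemma inner_n_path_vec_frame:
  assumes "s \<in> idx Ns (length s)" "length s \<le> L" "\<And>i. n - length s \<le> i \<Longrightarrow> i < n \<Longrightarrow> v i = 0"
    "j \<in> {1..length s}"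
  shows "inner_n n (path_vec node s j) (frame s v) = 0"
  using assms
proof (induction s arbitrary: v j rule: rev_induct)
  case (snoc t s)
  define l where "l = length s"
  have l: "Suc l \<in> {1..L}" "s \<in> idx Ns l" "t < Ns (Suc l)"
    using snoc.prems(1,2) snoc_in_idx_iff[of s t Ns l] unfolding l_def by auto
  show ?case
  proof (cases "j \<le> l")
    case True
    have "inner_n n (path_vec node s j) (frame s (reflection (Suc l) t v)) = 0"
      using snoc.prems(2,3) True snoc.prems(4) l L_less
      by (intro snoc.IH) (auto simp: l_def intro!: reflection_eq_0)
    then show ?thesis using True by (simp add: path_vec_node_snoc frame_snoc l_def)
  next
    case False
    then have j: "j = Suc l" using snoc.prems(4) unfolding l_def by auto
    have "inner_n n (path_vec node (s @ [t]) j) (frame (s @ [t]) v)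
        = inner_n n (frame s (C (Suc l) t)) (frame s (reflection (Suc l) t v))"
      unfolding j frame_snoc path_vec_def l_def by (intro inner_n_cong) (simp_all add: node_snoc)
    also have "\<dots> = 0"
      using snoc.prems(3)[of "n - Suc l"] l L_less
      by (simp add: inner_n_frame inner_n_C_reflection l_def)
    finally show ?thesis .
  qed
qed simp

lemma angle_dense_construction_node: "angle_dense_construction n L d rad Ns node"
  unfolding angle_dense_construction_def
proof (intro conjI allI impI ballI)
  fix l s t assume l: "l < L" and s: "s \<in> idx Ns l" and t: "t < Ns (l + 1)"
  have len: "length s = l" using s by (simp add: length_idx)
  have l1: "l + 1 \<in> {1..L}" using l by simp
  show "node (s @ [t]) \<in> Rn n" by (rule node_in_Rn)
  show "norm_n n (node (s @ [t]) - node s) = rad (l + 1)"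
    unfolding norm_n_def inner_n_node_snoc len using inner_n_C[OF l1 t] rad_pos[OF l1] by simp
  fix j assume j: "j \<in> {1..l}"
  have "inner_n n (path_vec node s j) (frame s (C (l + 1) t)) = 0"
    using s len l j C_eq_0[OF l1 t] L_less by (intro inner_n_path_vec_frame) auto
  then show "inner_n n (path_vec node s j) (node (s @ [t]) - node s) = 0"
    by (simp add: inner_n_node_snoc_right len)
next
  fix l s assume l: "l < L" and s: "s \<in> idx Ns l"
  have len: "length s = l" using s by (simp add: length_idx)
  have l1: "l + 1 \<in> {1..L}" using l by simp
  have norm: "norm_n n (node (s @ [t]) - node s) = rad (l + 1)" if "t < Ns (l + 1)" for t
    unfolding norm_n_def inner_n_node_snoc len using inner_n_C[OF l1 that] rad_pos[OF l1] by simp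
  have "inner_n n ((node (s @ [k]) - node s) - (node (s @ [j]) - node s))
      ((node (s @ [k]) - node s) - (node (s @ [j]) - node s))
    = inner_n n (C (l + 1) k - C (l + 1) j) (C (l + 1) k - C (l + 1) j)" for j k
    unfolding inner_n_diff_self[of n "node (s @ [k]) - node s"] inner_n_diff_self[of n "C (l + 1) k"]
    by (simp add: inner_n_node_snoc len)
  then show "angle_dense n d (node s) (Ns (l + 1)) (\<lambda>t. node (s @ [t]))"
    unfolding angle_dense_def
    using norm rad_pos[OF l1] C_separated[OF l1]
    by (auto intro!: norm_n_proj_n_minus_ge)
qed (rule node_Nil)

end

section \<open>The explicit construction\<close>

definition lifted_grid_point :: "nat \<Rightarrow> real \<Rightarrow> real \<Rightarrow> (nat \<Rightarrow> int) \<Rightarrow> nat \<Rightarrow> real" where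
  "lifted_grid_point m \<eta> r k = (\<lambda>i. if i < m then \<eta> * of_int (k i)
     else if i = m then sqrt (r\<^sup>2 - (\<Sum>j<m. (\<eta> * of_int (k j))\<^sup>2)) else 0)"

lemma inner_n_eq_sum_upto:
  assumes "m < n" "\<And>i. m < i \<Longrightarrow> i < n \<Longrightarrow> x i * y i = 0"
  shows "inner_n n x y = (\<Sum>i<m. x i * y i) + x m * y m"
proof -
  have "inner_n n x y = (\<Sum>i<Suc m. x i * y i)"
    unfolding inner_n_def by (rule sum.mono_neutral_right) (use assms in auto)
  then show ?thesis by simp
qed

lemma inner_n_lifted_grid_point:
  assumes k: "k \<in> int_cube m K" and bound: "\<eta>\<^sup>2 * real m * (real K)\<^sup>2 \<le> r\<^sup>2" and "m < n"
  shows "inner_n n (lifted_grid_point m \<eta> r k) (lifted_grid_point m \<eta> r k) = r\<^sup>2"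
proof -
  have "(\<eta> * of_int (k i))\<^sup>2 \<le> \<eta>\<^sup>2 * (real K)\<^sup>2" if "i < m" for i
  proof -
    have "k i \<in> {- int K..int K}" using PiE_mem[OF k[unfolded int_cube_def], of i] that by simp
    then have "\<bar>real_of_int (k i)\<bar> \<le> real K" by auto
    then have "(real_of_int (k i))\<^sup>2 \<le> (real K)\<^sup>2" by (metis abs_le_square_iff abs_of_nat)
    then show ?thesis by (simp add: power_mult_distrib mult_left_mono)
  qed
  then have "(\<Sum>j<m. (\<eta> * of_int (k j))\<^sup>2) \<le> (\<Sum>j<m. \<eta>\<^sup>2 * (real K)\<^sup>2)"
    by (intro sum_mono) simp
  also have "\<dots> \<le> r\<^sup>2" using bound by (simp add: mult_ac)
  finally show ?thesis
    using assms(3) by (subst inner_n_eq_sum_upto[of m]) (simp_all add: lifted_grid_point_def power2_eq_square)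
qed

lemma inner_n_lifted_grid_point_diff_ge:
  assumes "m < n"
  shows "inner_n n (lifted_grid_point m \<eta> r k - lifted_grid_point m \<eta> r k')
      (lifted_grid_point m \<eta> r k - lifted_grid_point m \<eta> r k')
    \<ge> \<eta>\<^sup>2 * real_of_int (\<Sum>i<m. (k i - k' i)\<^sup>2)"
proof -
  define c where "c = lifted_grid_point m \<eta> r k - lifted_grid_point m \<eta> r k'"
  have "inner_n n c c = (\<Sum>i<m. c i * c i) + c m * c m"
    using assms by (rule inner_n_eq_sum_upto) (simp add: c_def lifted_grid_point_def)
  also have "(\<Sum>i<m. c i * c i) = (\<Sum>i<m. \<eta>\<^sup>2 * real_of_int ((k i - k' i)\<^sup>2))"
    by (intro sum.cong) (simp_all add: c_def lifted_grid_point_def power2_eq_square algebra_simps)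
  finally show ?thesis unfolding c_def[symmetric] by (simp add: sum_distrib_left)
qed

definition radius :: "real \<Rightarrow> nat \<Rightarrow> nat \<Rightarrow> real" where
  "radius b n l = real n powr ((1 - b) * 2 powr (- real l))"

text \<open>A codebook on the sphere of radius r with squared minimum distance 2 r d is d-angle-dense
  (norm_n_proj_n_minus_ge); here d = 3 log n.\<close>

definition min_dist :: "real \<Rightarrow> nat \<Rightarrow> nat \<Rightarrow> real" where
  "min_dist b n l = sqrt (2 * radius b n l * (3 * log 2 (real n)))"

definition grid_bound :: "real \<Rightarrow> nat \<Rightarrow> nat \<Rightarrow> nat" where
  "grid_bound b n l = nat \<lfloor>radius b n l / min_dist b n l\<rfloor>"

definition grid_step :: "real \<Rightarrow> nat \<Rightarrow> nat \<Rightarrow> real" where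
  "grid_step b n l = min_dist b n l / sqrt (real (n - l))"

definition layer_packing :: "real \<Rightarrow> nat \<Rightarrow> nat \<Rightarrow> (nat \<Rightarrow> int) set" where
  "layer_packing b n l = (SOME S. int_cube_packing (n - l) (grid_bound b n l) S)"

definition layer_enum :: "real \<Rightarrow> nat \<Rightarrow> nat \<Rightarrow> nat \<Rightarrow> nat \<Rightarrow> int" where
  "layer_enum b n l = (SOME f. bij_betw f {0..<card (layer_packing b n l)} (layer_packing b n l))"

definition layer_codeword :: "real \<Rightarrow> nat \<Rightarrow> nat \<Rightarrow> nat \<Rightarrow> nat \<Rightarrow> real" where
  "layer_codeword b n l t =
    lifted_grid_point (n - l) (grid_step b n l) (radius b n l) (layer_enum b n l t)"

text \<open>For n < L + 2 the layers are empty, so that the construction holds trivially there.\<close>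

definition layer_size :: "nat \<Rightarrow> real \<Rightarrow> nat \<Rightarrow> nat \<Rightarrow> nat" where
  "layer_size L b n l = (if L + 2 \<le> n \<and> l \<in> {1..L} then card (layer_packing b n l) else 0)"

definition code_points :: "nat \<Rightarrow> real \<Rightarrow> nat \<Rightarrow> nat list \<Rightarrow> nat \<Rightarrow> real" where
  "code_points L b n = (if L + 2 \<le> n
     then layered_codebooks.node n (layer_codeword b n) (radius b n) else (\<lambda>_. origin n))"

lemma radius_pos: "n > 0 \<Longrightarrow> radius b n l > 0"
  unfolding radius_def by simp

lemma min_dist_pos: "n \<ge> 2 \<Longrightarrow> min_dist b n l > 0"
  unfolding min_dist_def using radius_pos[of n b l] by simp

lemma power2_min_dist: "n \<ge> 2 \<Longrightarrow> (min_dist b n l)\<^sup>2 = 2 * radius b n l * (3 * log 2 (real n))"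
  unfolding min_dist_def using radius_pos[of n b l] by simp

lemma power2_grid_step: "l < n \<Longrightarrow> (grid_step b n l)\<^sup>2 * real (n - l) = (min_dist b n l)\<^sup>2"
  unfolding grid_step_def by (simp add: power_divide)

lemma grid_bound_le:
  assumes "n \<ge> 2"
  shows "real (grid_bound b n l) * min_dist b n l \<le> radius b n l"
proof -
  have "0 \<le> radius b n l / min_dist b n l"
    using radius_pos[of n b l] min_dist_pos[OF assms, of b l] assms by simp
  then have "real (grid_bound b n l) \<le> radius b n l / min_dist b n l"
    unfolding grid_bound_def by linarith
  then show ?thesis using min_dist_pos[OF assms, of b l] by (simp add: le_divide_eq)
qed

lemma int_cube_packing_layer_packing:
  "l < n \<Longrightarrow> int_cube_packing (n - l) (grid_bound b n l) (layer_packing b n l)"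
  unfolding layer_packing_def by (rule someI_ex[OF int_cube_packing_exists]) simp

lemma finite_layer_packing: "l < n \<Longrightarrow> finite (layer_packing b n l)"
  using int_cube_packing_layer_packing[of l n b] finite_int_cube
  unfolding int_cube_packing_def by (auto intro: finite_subset)

lemma bij_betw_layer_enum:
  "l < n \<Longrightarrow> bij_betw (layer_enum b n l) {0..<card (layer_packing b n l)} (layer_packing b n l)"
  unfolding layer_enum_def by (rule someI_ex[OF ex_bij_betw_nat_finite[OF finite_layer_packing]])

lemma inner_n_layer_codeword:
  assumes "n \<ge> 2" "0 < l" "l < n" "t < card (layer_packing b n l)"
  shows "inner_n n (layer_codeword b n l t) (layer_codeword b n l t) = (radius b n l)\<^sup>2"
proof -
  have "layer_enum b n l t \<in> layer_packing b n l"
    using bij_betw_layer_enum[OF assms(3), of b] assms(4) by (auto simp: bij_betw_def)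
  then have k: "layer_enum b n l t \<in> int_cube (n - l) (grid_bound b n l)"
    using int_cube_packing_layer_packing[OF assms(3), of b] by (auto simp: int_cube_packing_def)
  have "(grid_step b n l)\<^sup>2 * real (n - l) * (real (grid_bound b n l))\<^sup>2
      = (real (grid_bound b n l) * min_dist b n l)\<^sup>2"
    using power2_grid_step[OF assms(3)] by (simp add: power_mult_distrib)
  also have "\<dots> \<le> (radius b n l)\<^sup>2"
    using grid_bound_le[OF assms(1)] min_dist_pos[OF assms(1), of b l] by (intro power_mono) auto
  finally show ?thesis
    unfolding layer_codeword_def using assms(2,3) by (intro inner_n_lifted_grid_point[OF k]) auto
qed

lemma inner_n_layer_codeword_diff_ge:
  assumes n: "n \<ge> 2" "0 < l" "l < n" and t: "t < card (layer_packing b n l)" "t' < card (layer_packing b n l)" "t \<noteq> t'"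
  shows "inner_n n (layer_codeword b n l t - layer_codeword b n l t')
    (layer_codeword b n l t - layer_codeword b n l t') \<ge> 2 * radius b n l * (3 * log 2 (real n))"
proof -
  let ?k = "layer_enum b n l"
  have "bij_betw ?k {0..<card (layer_packing b n l)} (layer_packing b n l)"
    by (rule bij_betw_layer_enum[OF n(3)])
  then have "?k t \<in> layer_packing b n l" "?k t' \<in> layer_packing b n l" "?k t \<noteq> ?k t'"
    using t by (auto simp: bij_betw_def dest: inj_onD)
  then have "int (n - l) \<le> (\<Sum>i<n - l. (?k t i - ?k t' i)\<^sup>2)"
    using int_cube_packing_layer_packing[OF n(3), of b] unfolding int_cube_packing_def by blast
  then have "real (n - l) \<le> real_of_int (\<Sum>i<n - l. (?k t i - ?k t' i)\<^sup>2)"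
    by linarith
  then have "(grid_step b n l)\<^sup>2 * real (n - l) \<le> (grid_step b n l)\<^sup>2 * real_of_int (\<Sum>i<n - l. (?k t i - ?k t' i)\<^sup>2)"
    by (intro mult_left_mono) auto
  also have "\<dots> \<le> inner_n n (layer_codeword b n l t - layer_codeword b n l t')
      (layer_codeword b n l t - layer_codeword b n l t')"
    unfolding layer_codeword_def using n by (intro inner_n_lifted_grid_point_diff_ge) auto
  finally show ?thesis using power2_grid_step[OF n(3)] power2_min_dist[OF n(1)] by simp
qed

lemma layered_codebooks_layer_codeword:
  assumes n: "L + 2 \<le> n"
  shows "layered_codebooks n L (layer_codeword b n) (radius b n) (layer_size L b n) (3 * log 2 (real n))"
proof
  fix l assume l: "l \<in> {1..L}"
  then have n2: "n \<ge> 2" "0 < l" "l < n" and size: "layer_size L b n l = card (layer_packing b n l)"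
    using n by (auto simp: layer_size_def)
  show "radius b n l > 0" using radius_pos n by simp
  show "inner_n n (layer_codeword b n l t) (layer_codeword b n l t) = (radius b n l)\<^sup>2"
    if "t < layer_size L b n l" for t
    using that size by (intro inner_n_layer_codeword[OF n2]) simp
  show "layer_codeword b n l t i = 0" if "n - l < i" for t i
    using that unfolding layer_codeword_def lifted_grid_point_def by simp
  show "inner_n n (layer_codeword b n l t - layer_codeword b n l t')
      (layer_codeword b n l t - layer_codeword b n l t') \<ge> 2 * radius b n l * (3 * log 2 (real n))"
    if "t < layer_size L b n l" "t' < layer_size L b n l" "t \<noteq> t'" for t t'
    using that size by (intro inner_n_layer_codeword_diff_ge[OF n2]) simp_all
qed (use n in simp)

lemma angle_dense_construction_code_points:
  "angle_dense_construction n L (3 * log 2 (real n)) (\<lambda>l. real n powr ((1 - b) * 2 powr (- real l)))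
    (layer_size L b n) (code_points L b n)"
proof (cases "L + 2 \<le> n")
  case True
  then show ?thesis
    using layered_codebooks.angle_dense_construction_node[OF layered_codebooks_layer_codeword[OF True]]
    unfolding code_points_def radius_def by simp
next
  case False
  then have "layer_size L b n = (\<lambda>_. 0)" unfolding layer_size_def by auto
  then show ?thesis
    using False unfolding code_points_def angle_dense_construction_def angle_dense_def by simp
qed

lemma layer_size_ge:
  assumes n: "L + 2 \<le> n" and l: "l \<in> {1..L}"
  shows "(radius b n l / min_dist b n l / 6) ^ (n - l) \<le> real (layer_size L b n l)"
proof -
  have n2: "n \<ge> 2" and ln: "l < n" using n l by auto
  define m where "m = n - l"
  define K where "K = grid_bound b n l"
  define q where "q = radius b n l / min_dist b n l"
  have q: "q > 0" unfolding q_def using radius_pos[of n b l] min_dist_pos[OF n2, of b l] n2 by simp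
  have size: "layer_size L b n l = card (layer_packing b n l)"
    unfolding layer_size_def using n l by auto
  have "q - 1 < real K" unfolding K_def grid_bound_def q_def[symmetric] by linarith
  then have "q ^ m \<le> real (2 * K + 1) ^ m" using q by (intro power_mono) auto
  also have "\<dots> \<le> real (layer_size L b n l) * 6 ^ m"
  proof -
    have "(2 * K + 1) ^ m \<le> layer_size L b n l * 6 ^ m"
      using int_cube_packing_layer_packing[OF ln, of b]
      unfolding int_cube_packing_def size K_def m_def by simp
    then have "real ((2 * K + 1) ^ m) \<le> real (layer_size L b n l * 6 ^ m)"
      by (rule of_nat_mono)
    then show ?thesis by simp
  qed
  finally have "q ^ m / 6 ^ m \<le> real (layer_size L b n l)"
    by (simp add: pos_divide_le_eq)
  then show ?thesis unfolding q_def[symmetric] m_def[symmetric] by (simp add: power_divide)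
qed

lemma layer_size_pos: "L + 2 \<le> n \<Longrightarrow> l \<in> {1..L} \<Longrightarrow> layer_size L b n l > 0"
proof -
  assume n: "L + 2 \<le> n" and l: "l \<in> {1..L}"
  have "0 < (radius b n l / min_dist b n l / 6) ^ (n - l)"
    using radius_pos[of n b l] min_dist_pos[of n b l] n by simp
  then show ?thesis using layer_size_ge[OF n l, of b] by linarith
qed

lemma log_layer_size_ge:
  assumes n: "L + 2 \<le> n" and l: "l \<in> {1..L}"
  shows "log 2 (real (layer_size L b n l)) \<ge> real (n - l) *
    (((1 - b) * 2 powr (- real l) * log 2 (real n) - log 2 (6 * log 2 (real n))) / 2 - log 2 6)"
proof -
  have n2: "n \<ge> 2" using n by simp
  define r where "r = radius b n l"
  define \<delta> where "\<delta> = min_dist b n l"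
  have r: "r > 0" unfolding r_def using radius_pos n by simp
  have \<delta>: "\<delta> > 0" unfolding \<delta>_def by (rule min_dist_pos[OF n2])
  have logn: "log 2 (real n) > 0" using n2 by simp
  have "2 * log 2 (r / \<delta>) = log 2 ((r / \<delta>)\<^sup>2)"
    using r \<delta> by (simp add: log_nat_power)
  also have "(r / \<delta>)\<^sup>2 = r / (6 * log 2 (real n))"
    using power2_min_dist[OF n2, of b l] r logn unfolding \<delta>_def[symmetric] r_def[symmetric]
    by (simp add: power_divide power2_eq_square field_simps)
  also have "log 2 (r / (6 * log 2 (real n))) = log 2 r - log 2 (6 * log 2 (real n))"
    using r logn by (subst log_divide) auto
  also have "log 2 r = (1 - b) * 2 powr (- real l) * log 2 (real n)"
    unfolding r_def radius_def using n2 by (simp add: log_powr)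
  finally have q: "log 2 (r / \<delta>) =
      ((1 - b) * 2 powr (- real l) * log 2 (real n) - log 2 (6 * log 2 (real n))) / 2"
    by simp
  have "log 2 (r / \<delta> / 6) = log 2 (r / \<delta>) - log 2 6"
    using r \<delta> by (intro log_divide_pos) simp_all
  then have "real (n - l) *
      (((1 - b) * 2 powr (- real l) * log 2 (real n) - log 2 (6 * log 2 (real n))) / 2 - log 2 6)
      = real (n - l) * log 2 (r / \<delta> / 6)"
    by (simp only: q)
  also have "\<dots> = log 2 ((r / \<delta> / 6) ^ (n - l))"
    using r \<delta> by (simp add: log_nat_power)
  also have "\<dots> \<le> log 2 (real (layer_size L b n l))"
    using layer_size_ge[OF n l, of b] r \<delta> unfolding r_def \<delta>_def by (intro log_mono) auto
  finally show ?thesis .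
qed

lemma log_prod_layer_size:
  assumes "L + 2 \<le> n"
  shows "log 2 (real (\<Prod>l\<in>{1..L}. layer_size L b n l)) = (\<Sum>l\<in>{1..L}. log 2 (real (layer_size L b n l)))"
proof -
  have "real (layer_size L b n l) \<noteq> 0" if "l \<in> {1..L}" for l
    using layer_size_pos[OF assms that, of b] by simp
  then have "ln (\<Prod>l\<in>{1..L}. real (layer_size L b n l)) = (\<Sum>l\<in>{1..L}. ln (real (layer_size L b n l)))"
    by (subst ln_prod) auto
  then show ?thesis
    by (simp add: log_def of_nat_prod sum_divide_distrib)
qed

lemma tendsto_layer_rate:
  fixes a :: real and l :: nat
  shows "(\<lambda>n. real (n - l) * ((a * log 2 (real n) - log 2 (6 * log 2 (real n))) / 2 - log 2 6)
      / (real n * log 2 (real n))) \<longlonglongrightarrow> a / 2"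
proof -
  define f where "f n = (real n - real l) / real n *
      (a / 2 - (log 2 (6 * log 2 (real n)) / log 2 (real n) / 2 + log 2 6 * (1 / log 2 (real n))))"
    for n :: nat
  have "(\<lambda>n. log 2 (6 * log 2 (real n)) / log 2 (real n)) \<longlonglongrightarrow> 0" by real_asymp
  moreover have "(\<lambda>n. 1 / log 2 (real n)) \<longlonglongrightarrow> 0" by real_asymp
  moreover have "(\<lambda>n. (real n - real l) / real n) \<longlonglongrightarrow> 1" by real_asymp
  ultimately have "f \<longlonglongrightarrow> 1 * (a / 2 - (0 / 2 + log 2 6 * 0))"
    unfolding f_def by (intro tendsto_intros) auto
  moreover have "eventually (\<lambda>n. f n = real (n - l) * ((a * log 2 (real n) - log 2 (6 * log 2 (real n))) / 2
      - log 2 6) / (real n * log 2 (real n))) sequentially"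
  proof (rule eventually_mono[OF eventually_ge_at_top[of "l + 2"]])
    fix n assume n: "l + 2 \<le> n"
    have alg: "(N - l') / N * (a / 2 - (Y / X / 2 + c * (1 / X))) = (N - l') * ((a * X - Y) / 2 - c) / (N * X)"
      if "X > 0" "N > 0" for N l' X Y c :: real
      using that by (simp add: field_simps)
    have "log 2 (real n) > 0" "real n > 0" "real (n - l) = real n - real l" using n by auto
    then show "f n = real (n - l) * ((a * log 2 (real n) - log 2 (6 * log 2 (real n))) / 2 - log 2 6)
        / (real n * log 2 (real n))"
      unfolding f_def by (simp only: alg)
  qed
  ultimately show ?thesis using Lim_transform_eventually by fastforce
qed

lemma code_rate_eventually_ge:
  assumes "\<epsilon> > 0"
  shows "eventually (\<lambda>n. log 2 (real (\<Prod>l\<in>{1..L}. layer_size L b n l)) / (real n * log 2 (real n))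
    \<ge> (1 - b) / 2 * (\<Sum>l\<in>{1..L}. 2 powr (- real l)) - \<epsilon>) sequentially"
proof (cases "L = 0")
  case False
  define \<alpha> where "\<alpha> l = (1 - b) * 2 powr (- real l)" for l :: nat
  define g where "g l n = real (n - l) * ((\<alpha> l * log 2 (real n) - log 2 (6 * log 2 (real n))) / 2 - log 2 6)
      / (real n * log 2 (real n))" for l n :: nat
  have "\<forall>l\<in>{1..L}. eventually (\<lambda>n. g l n > \<alpha> l / 2 - \<epsilon> / real L) sequentially"
    using assms False unfolding g_def by (auto intro!: order_tendstoD(1) tendsto_layer_rate)
  then have "eventually (\<lambda>n. (\<forall>l\<in>{1..L}. g l n > \<alpha> l / 2 - \<epsilon> / real L) \<and> L + 2 \<le> n) sequentially"
    by (intro eventually_conj eventually_ball_finite eventually_ge_at_top) auto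
  then show ?thesis
  proof (rule eventually_mono)
    fix n assume n: "(\<forall>l\<in>{1..L}. g l n > \<alpha> l / 2 - \<epsilon> / real L) \<and> L + 2 \<le> n"
    have "(1 - b) / 2 * (\<Sum>l\<in>{1..L}. 2 powr (- real l)) - \<epsilon> = (\<Sum>l\<in>{1..L}. \<alpha> l / 2 - \<epsilon> / real L)"
      using False unfolding \<alpha>_def by (simp add: sum_subtractf sum_distrib_left sum_divide_distrib)
    also have "\<dots> \<le> (\<Sum>l\<in>{1..L}. g l n)"
      using n by (intro sum_mono) (simp add: less_imp_le)
    also have "\<dots> \<le> (\<Sum>l\<in>{1..L}. log 2 (real (layer_size L b n l))) / (real n * log 2 (real n))"
      unfolding sum_divide_distrib g_def \<alpha>_def using n log_layer_size_ge[of L n]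
      by (intro sum_mono divide_right_mono) auto
    finally show "log 2 (real (\<Prod>l\<in>{1..L}. layer_size L b n l)) / (real n * log 2 (real n))
        \<ge> (1 - b) / 2 * (\<Sum>l\<in>{1..L}. 2 powr (- real l)) - \<epsilon>"
      unfolding log_prod_layer_size[OF conjunct2[OF n]] .
  qed
qed (use assms in simp)

lemma power2_radius_le:
  assumes b: "b < 1" and n: "n \<ge> 1" and jl: "real j \<ge> real l + 1"
  shows "(radius b n j)\<^sup>2 \<le> radius b n l"
proof -
  have "2 * 2 powr (- real j) = 2 powr (1 - real j)" by (simp add: powr_diff powr_minus field_simps)
  also have "\<dots> \<le> 2 powr (- real l)" using jl by (intro powr_mono) auto
  finally have "2 * ((1 - b) * 2 powr (- real j)) \<le> (1 - b) * 2 powr (- real l)"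
    using b by (simp add: mult_left_mono)
  then have "real n powr (2 * ((1 - b) * 2 powr (- real j))) \<le> radius b n l"
    unfolding radius_def using n by (intro powr_mono) auto
  then show ?thesis
    unfolding radius_def using n by (simp add: power2_eq_square flip: powr_add)
qed

lemma sum_power2_radius_tail_le:
  assumes "b < 1" "n \<ge> 1" "l \<in> {1..L}"
  shows "(\<Sum>j\<in>{l<..L}. (radius b n j)\<^sup>2) \<le> real L * radius b n l"
proof -
  have "(\<Sum>j\<in>{l<..L}. (radius b n j)\<^sup>2) \<le> (\<Sum>j\<in>{l<..L}. radius b n l)"
    using assms by (intro sum_mono power2_radius_le) auto
  also have "\<dots> \<le> real L * radius b n l"
    using radius_pos[of n b l] assms by (simp add: mult_right_mono)
  finally show ?thesis .
qed

lemma sum_power2_radius_le: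
  assumes "b < 1" "n \<ge> 1"
  shows "(\<Sum>j\<in>{1..L}. (radius b n j)\<^sup>2) \<le> real L * real n powr (1 - b)"
proof -
  have "(\<Sum>j\<in>{1..L}. (radius b n j)\<^sup>2) \<le> (\<Sum>j\<in>{1..L}. radius b n 0)"
    using assms by (intro sum_mono power2_radius_le) auto
  then show ?thesis by (simp add: radius_def)
qed

lemma DI_code_code_points:
  assumes b: "b < 1" and \<sigma>: "\<sigma> > 0" and n: "L + 2 \<le> n" "6 * real L \<le> log 2 (real n)"
    and P: "real L * real n powr (1 - b) \<le> real n * P"
  shows "(\<forall>s\<in>idx (layer_size L b n) L. (norm_n n (code_points L b n s))\<^sup>2 \<le> real n * P) \<and>
    DI_code n P \<sigma> (idx (layer_size L b n) L) (code_points L b n) (decoding_set n L (code_points L b n))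
      (real L * (2 * Phi (- log 2 (real n) / \<sigma>))) (2 * Phi (- log 2 (real n) / \<sigma>))"
proof -
  interpret angle_dense_tree n L "3 * log 2 (real n)" "radius b n" "layer_size L b n" "code_points L b n"
    using angle_dense_construction_code_points[of n L b]
    by (simp add: angle_dense_tree_def radius_def[abs_def])
  have n1: "n \<ge> 1" and logn: "log 2 (real n) > 0" using n by auto
  have power: "(\<Sum>j\<in>{1..L}. (radius b n j)\<^sup>2) \<le> real n * P"
    using sum_power2_radius_le[OF b n1, of L] P by simp
  show ?thesis
    using norm_n_codeword power radius_pos[of n b] n1 logn n(2)
      sum_power2_radius_tail_le[OF b n1]
    by (intro conjI ballI DI_code_decoding_set[OF \<sigma> refl]) auto
qed

theorem theorem5:
  fixes L :: nat and b :: real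
  assumes "0 < b" and "b < 1"
  shows "\<exists>(Ns :: nat \<Rightarrow> nat \<Rightarrow> nat) (pt :: nat \<Rightarrow> nat list \<Rightarrow> nat \<Rightarrow> real).
    (\<forall>n. angle_dense_construction n L (3 * log 2 (real n))
            (\<lambda>l. real n powr ((1 - b) * 2 powr (- real l))) (Ns n) (pt n)) \<and>
    (\<forall>\<epsilon>>0. eventually (\<lambda>n.
        log 2 (real (\<Prod>l\<in>{1..L}. Ns n l)) / (real n * log 2 (real n))
          \<ge> (1 - b) / 2 * (\<Sum>l\<in>{1..L}. 2 powr (- real l)) - \<epsilon>) sequentially) \<and>
    (\<forall>P>0. \<forall>\<sigma>>0. \<exists>n0. \<forall>n\<ge>n0.
        (\<forall>s\<in>idx (Ns n) L. (norm_n n (pt n s))\<^sup>2 \<le> real n * P) \<and>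
        DI_code n P \<sigma> (idx (Ns n) L) (pt n) (decoding_set n L (pt n))
          (real L * (2 * Phi (- log 2 (real n) / \<sigma>))) (2 * Phi (- log 2 (real n) / \<sigma>)))"
proof (intro exI[of _ "layer_size L b"] exI[of _ "code_points L b"] conjI allI impI)
  show "angle_dense_construction n L (3 * log 2 (real n))
      (\<lambda>l. real n powr ((1 - b) * 2 powr (- real l))) (layer_size L b n) (code_points L b n)" for n
    by (rule angle_dense_construction_code_points)
  show "eventually (\<lambda>n. log 2 (real (\<Prod>l\<in>{1..L}. layer_size L b n l)) / (real n * log 2 (real n))
      \<ge> (1 - b) / 2 * (\<Sum>l\<in>{1..L}. 2 powr (- real l)) - \<epsilon>) sequentially" if "\<epsilon> > 0" for \<epsilon>
    using that by (rule code_rate_eventually_ge)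
  fix P \<sigma> :: real assume P: "P > 0" and \<sigma>: "\<sigma> > 0"
  have "eventually (\<lambda>n. L + 2 \<le> n \<and> 6 * real L \<le> log 2 (real n) \<and>
      real L * real n powr (1 - b) \<le> real n * P) sequentially"
    using assms(1) P by (intro eventually_conj eventually_ge_at_top) real_asymp+
  then show "\<exists>n0. \<forall>n\<ge>n0.
      (\<forall>s\<in>idx (layer_size L b n) L. (norm_n n (code_points L b n s))\<^sup>2 \<le> real n * P) \<and>
      DI_code n P \<sigma> (idx (layer_size L b n) L) (code_points L b n) (decoding_set n L (code_points L b n))
        (real L * (2 * Phi (- log 2 (real n) / \<sigma>))) (2 * Phi (- log 2 (real n) / \<sigma>))"
    unfolding eventually_sequentially using DI_code_code_points[OF assms(2) \<sigma>] by blast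
qed

end
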